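(* Let $G$ be a biconnected Eulerian graph and let $G_1,\dots,G_k$ be its 2.5-connected components (virtual edges treated as ordinary edges). Then (a) $c(G)=\sum_{i=1}^k c(G_i)-k+1$; (b) $\nu(G)=\sum_{i=1}^k \nu(G_i)-k+1$.
   Context: Graphs are finite, may have parallel edges (so a cycle may have length 2), no loops. A cycle decomposition of $G$ is a set of cycles in $G$ such that each edge lies in exactly one of them. For an Eulerian graph $H$, $c(H)$ and $\nu(H)$ are the minimum and maximum number of cycles in a cycle decomposition of $H$. Biconnected: connected and for all pairwise distinct $u,v,w$ there is a $u$-$v$ path avoiding $w$. For biconnected $H$ not a triangle, $(c,uv)\in V(H)\times E(H)$ is a vertex-edge-separator if $H-uv-c$ is disconnected; then it has exactly two components $C_u\ni u,C_v\ni v$. For $a\in\{u,v\}$ with other endpoint $b$, let $H_a=H[V(C_a)\cup\{c\}]$; if $|E(H_a)|\ge2$, the 2.5-split replaces $H$ by $H_a+ac$ and $H[V(C_b)\cup\{c\}]+ba+ac$, where the two new edges $ac$ are virtual and correspond to each other. $H$ is 2.5-connected if biconnected with no vertex-edge-separator. Applying 2.5-splits until none is possible, and then merging (gluing at corresponding virtual edges and deleting them) the resulting triangles as much as possible into cycles, gives the 2.5-connected components of $G$. *)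

theory Defs
  imports Main "HOL-Library.Multiset"
begin

section \<open>Finite multigraphs with labelled edges (parallel edges allowed, no loops)\<close>

record ('v, 'e) mgraph =
  verts :: "'v set"
  edges :: "'e set"
  ends  :: "'e \<Rightarrow> 'v set"

definition wf_graph :: "('v, 'e) mgraph \<Rightarrow> bool" where
  "wf_graph G \<longleftrightarrow> finite (verts G) \<and> finite (edges G) \<and>
     (\<forall>e\<in>edges G. card (ends G e) = 2 \<and> ends G e \<subseteq> verts G)"

definition degree :: "('v, 'e) mgraph \<Rightarrow> 'v \<Rightarrow> nat" where
  "degree G v = card {e \<in> edges G. v \<in> ends G e}"

definition eulerian :: "('v, 'e) mgraph \<Rightarrow> bool" where
  "eulerian G \<longleftrightarrow> (\<forall>v\<in>verts G. even (degree G v))"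

definition is_cycle :: "('v, 'e) mgraph \<Rightarrow> 'e set \<Rightarrow> bool" where
  "is_cycle G C \<longleftrightarrow> (\<exists>vs es. length vs = length es \<and> length es \<ge> 2 \<and>
       distinct vs \<and> distinct es \<and> set es = C \<and> set es \<subseteq> edges G \<and>
       (\<forall>i<length es. ends G (es ! i) = {vs ! i, vs ! ((i + 1) mod length es)}))"

definition cycle_decomp :: "('v, 'e) mgraph \<Rightarrow> 'e set set \<Rightarrow> bool" where
  "cycle_decomp G D \<longleftrightarrow> (\<forall>C\<in>D. is_cycle G C) \<and>
       (\<forall>C\<in>D. \<forall>C'\<in>D. C \<noteq> C' \<longrightarrow> C \<inter> C' = {}) \<and> \<Union>D = edges G"

definition cmin :: "('v, 'e) mgraph \<Rightarrow> nat" where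
  "cmin G = Min (card ` {D. cycle_decomp G D})"

definition nu :: "('v, 'e) mgraph \<Rightarrow> nat" where
  "nu G = Max (card ` {D. cycle_decomp G D})"

text \<open>Adjacency in the graph G - F - W (edges F and vertices W deleted).\<close>
definition adj_avoid :: "('v, 'e) mgraph \<Rightarrow> 'e set \<Rightarrow> 'v set \<Rightarrow> 'v \<Rightarrow> 'v \<Rightarrow> bool" where
  "adj_avoid G F W x y \<longleftrightarrow> x \<notin> W \<and> y \<notin> W \<and> (\<exists>e\<in>edges G - F. ends G e = {x, y})"

definition reach :: "('v, 'e) mgraph \<Rightarrow> 'e set \<Rightarrow> 'v set \<Rightarrow> 'v \<Rightarrow> 'v \<Rightarrow> bool" where
  "reach G F W x y \<longleftrightarrow> x \<in> verts G - W \<and> (adj_avoid G F W)\<^sup>*\<^sup>* x y"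

definition connected_avoid :: "('v, 'e) mgraph \<Rightarrow> 'e set \<Rightarrow> 'v set \<Rightarrow> bool" where
  "connected_avoid G F W \<longleftrightarrow> verts G - W \<noteq> {} \<and>
     (\<forall>x\<in>verts G - W. \<forall>y\<in>verts G - W. reach G F W x y)"

definition connected :: "('v, 'e) mgraph \<Rightarrow> bool" where
  "connected G \<longleftrightarrow> connected_avoid G {} {}"

definition biconnected :: "('v, 'e) mgraph \<Rightarrow> bool" where
  "biconnected G \<longleftrightarrow> connected G \<and>
     (\<forall>u\<in>verts G. \<forall>v\<in>verts G. \<forall>w\<in>verts G.
        u \<noteq> v \<and> u \<noteq> w \<and> v \<noteq> w \<longrightarrow> reach G {} {w} u v)"

definition is_cycle_graph :: "('v, 'e) mgraph \<Rightarrow> bool" where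
  "is_cycle_graph G \<longleftrightarrow> is_cycle G (edges G) \<and> verts G = \<Union>(ends G ` edges G)"

definition is_triangle :: "('v, 'e) mgraph \<Rightarrow> bool" where
  "is_triangle G \<longleftrightarrow> is_cycle_graph G \<and> card (edges G) = 3"

definition induced :: "('v, 'e) mgraph \<Rightarrow> 'v set \<Rightarrow> ('v, 'e) mgraph" where
  "induced G S = \<lparr>verts = S, edges = {e \<in> edges G. ends G e \<subseteq> S}, ends = ends G\<rparr>"

definition add_edge :: "('v, 'e) mgraph \<Rightarrow> 'e \<Rightarrow> 'v set \<Rightarrow> ('v, 'e) mgraph" where
  "add_edge G x X = \<lparr>verts = verts G \<union> X, edges = insert x (edges G), ends = (ends G)(x := X)\<rparr>"

definition ve_separator :: "('v, 'e) mgraph \<Rightarrow> 'v \<Rightarrow> 'e \<Rightarrow> bool" where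
  "ve_separator H c e \<longleftrightarrow> biconnected H \<and> \<not> is_triangle H \<and>
     c \<in> verts H \<and> e \<in> edges H \<and> \<not> connected_avoid H {e} {c}"

definition comp :: "('v, 'e) mgraph \<Rightarrow> 'v \<Rightarrow> 'e \<Rightarrow> 'v \<Rightarrow> 'v set" where
  "comp H c e a = {y. reach H {e} {c} a y}"

definition other_end :: "('v, 'e) mgraph \<Rightarrow> 'e \<Rightarrow> 'v \<Rightarrow> 'v" where
  "other_end H e a = the_elem (ends H e - {a})"

definition H_part :: "('v, 'e) mgraph \<Rightarrow> 'v \<Rightarrow> 'e \<Rightarrow> 'v \<Rightarrow> ('v, 'e) mgraph" where
  "H_part H c e a = induced H (comp H c e a \<union> {c})"

text \<open>The two graphs produced by the 2.5-split; the new virtual edges ac get the same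
  (fresh) label x in both graphs, which records that they correspond to each other.
  The edge ba re-added to the second graph is the edge e itself (keeping its label).\<close>
definition split_first :: "('v, 'e) mgraph \<Rightarrow> 'v \<Rightarrow> 'e \<Rightarrow> 'v \<Rightarrow> 'e \<Rightarrow> ('v, 'e) mgraph" where
  "split_first H c e a x = add_edge (H_part H c e a) x {a, c}"

definition split_second :: "('v, 'e) mgraph \<Rightarrow> 'v \<Rightarrow> 'e \<Rightarrow> 'v \<Rightarrow> 'e \<Rightarrow> ('v, 'e) mgraph" where
  "split_second H c e a x =
     add_edge (add_edge (H_part H c e (other_end H e a)) e (ends H e)) x {a, c}"

definition split_step :: "('v, 'e) mgraph multiset \<Rightarrow> ('v, 'e) mgraph multiset \<Rightarrow> bool" where
  "split_step L L' \<longleftrightarrow> (\<exists>M H c e a x. L = add_mset H M \<and> ve_separator H c e \<and>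
      a \<in> ends H e \<and> card (edges (H_part H c e a)) \<ge> 2 \<and>
      x \<notin> \<Union>(edges ` set_mset L) \<and>
      L' = add_mset (split_first H c e a x) (add_mset (split_second H c e a x) M))"

definition glue :: "('v, 'e) mgraph \<Rightarrow> ('v, 'e) mgraph \<Rightarrow> 'e \<Rightarrow> ('v, 'e) mgraph" where
  "glue A B x = \<lparr>verts = verts A \<union> verts B, edges = (edges A \<union> edges B) - {x},
     ends = (\<lambda>e. if e \<in> edges A then ends A e else ends B e)\<rparr>"

text \<open>Cycles arising from triangles (all cycle graphs of length >= 3; after the split phase the
  only such pieces are triangles, longer cycles arise only by merging).\<close>
definition merge_step :: "('v, 'e) mgraph multiset \<Rightarrow> ('v, 'e) mgraph multiset \<Rightarrow> bool" where
  "merge_step L L' \<longleftrightarrow> (\<exists>M A B x. L = add_mset A (add_mset B M) \<and>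
      is_cycle_graph A \<and> is_cycle_graph B \<and> card (edges A) \<ge> 3 \<and> card (edges B) \<ge> 3 \<and>
      x \<in> edges A \<and> x \<in> edges B \<and> L' = add_mset (glue A B x) M)"

definition is_25_components :: "('v, 'e) mgraph \<Rightarrow> ('v, 'e) mgraph multiset \<Rightarrow> bool" where
  "is_25_components G K \<longleftrightarrow> (\<exists>L. split_step\<^sup>*\<^sup>* {#G#} L \<and> \<not> (\<exists>L'. split_step L L') \<and>
      merge_step\<^sup>*\<^sup>* L K \<and> \<not> (\<exists>K'. merge_step K K'))"

end

theory Submission
  imports Defs
begin

text \<open>Let H be split at a vertex-edge separator (c, e) with e = ab. In a cycle decomposition of H
  the cycle through e must pass through c; cutting it there and closing both halves with the
  virtual edge ac gives one cycle of each piece, while every other cycle lies in one piece.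
  Conversely the two cycles through the virtual edge glue back together. So decompositions of H
  correspond to pairs of decompositions of the pieces with one cycle more, and
  c(H) + 1 = c(H_a) + c(H_b), \<nu>(H) + 1 = \<nu>(H_a) + \<nu>(H_b). Hence the sum of c(P) - 1 (and of
  \<nu>(P) - 1) over the current family of pieces never changes under splits. Merging two triangles
  or cycles along a virtual edge gives a cycle again, for which c = \<nu> = 1, so the sums also
  survive the merge phase. That the merged graph is a cycle needs that the two cycles meet only in
  the virtual edge and its ends; this follows from an invariant saying that the pieces are glued
  along virtual edges like the nodes of a tree. Eulerianity of G makes the decompositions exist,
  so that c and \<nu> are not junk values of Min and Max on the empty set.\<close>

section \<open>Paths and cycles\<close>

definition is_path :: "('v, 'e) mgraph \<Rightarrow> 'v list \<Rightarrow> 'e list \<Rightarrow> bool" where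
  "is_path H vs es \<longleftrightarrow> length vs = Suc (length es) \<and> distinct vs \<and> distinct es \<and>
     set es \<subseteq> edges H \<and> (\<forall>i<length es. ends H (es ! i) = {vs ! i, vs ! Suc i})"

definition cycle_walk :: "('v, 'e) mgraph \<Rightarrow> 'v list \<Rightarrow> 'e list \<Rightarrow> bool" where
  "cycle_walk H vs es \<longleftrightarrow> length vs = length es \<and> length es \<ge> 2 \<and>
       distinct vs \<and> distinct es \<and> set es \<subseteq> edges H \<and>
       (\<forall>i<length es. ends H (es ! i) = {vs ! i, vs ! ((i + 1) mod length es)})"

lemma wf_graph_edgeE:
  assumes "wf_graph G" "f \<in> edges G"
  obtains u w where "ends G f = {u, w}" "u \<noteq> w" "u \<in> verts G" "w \<in> verts G"
  using assms unfolding wf_graph_def by (metis card_2_iff insert_subset)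

lemma last_conv_nth_length: "length xs = Suc n \<Longrightarrow> last xs = xs ! n"
  by (metis diff_Suc_1 last_conv_nth length_0_conv nat.distinct(1))

lemma hd_conv_nth_length: "length xs \<noteq> 0 \<Longrightarrow> hd xs = xs ! 0"
  by (simp add: hd_conv_nth)

lemma is_cycle_iff_cycle_walk: "is_cycle H C \<longleftrightarrow> (\<exists>vs es. cycle_walk H vs es \<and> set es = C)"
  unfolding is_cycle_def cycle_walk_def by blast

definition closing_edge :: "('v, 'e) mgraph \<Rightarrow> 'v list \<Rightarrow> 'e list \<Rightarrow> 'e \<Rightarrow> bool" where
  "closing_edge H vs es f \<longleftrightarrow> is_path H vs es \<and> es \<noteq> [] \<and> f \<in> edges H \<and> f \<notin> set es \<and>
     ends H f = {last vs, hd vs}"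

lemma cycle_walk_rotate:
  assumes "cycle_walk H vs es"
  shows "cycle_walk H (rotate k vs) (rotate k es)"
proof -
  let ?n = "length es"
  have len: "length vs = ?n" "?n \<ge> 2" using assms by (auto simp: cycle_walk_def)
  have E: "\<And>i. i < ?n \<Longrightarrow> ends H (es ! i) = {vs ! i, vs ! ((i + 1) mod ?n)}"
    using assms by (auto simp: cycle_walk_def)
  have "ends H (rotate k es ! i) = {rotate k vs ! i, rotate k vs ! ((i + 1) mod ?n)}" if i: "i < ?n" for i
  proof -
    have "rotate k es ! i = es ! ((k + i) mod ?n)" using i by (simp add: nth_rotate)
    moreover have "rotate k vs ! i = vs ! ((k + i) mod ?n)" using i len by (simp add: nth_rotate)
    moreover have "rotate k vs ! ((i + 1) mod ?n) = vs ! ((k + (i + 1) mod ?n) mod ?n)"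
    proof -
      have "0 < ?n" using len by linarith
      then have "(i + 1) mod ?n < length vs" using len by simp
      then show ?thesis using len by (simp add: nth_rotate)
    qed
    moreover have "(k + (i + 1) mod ?n) mod ?n = ((k + i) mod ?n + 1) mod ?n"
      by (simp add: mod_add_right_eq add.assoc mod_simps)
    moreover have "(k + i) mod ?n < ?n" using len by (intro mod_less_divisor) linarith
    ultimately show ?thesis using E by simp
  qed
  then show ?thesis using assms by (auto simp: cycle_walk_def)
qed

lemma cycle_walk_closing_edge:
  assumes "cycle_walk H vs es"
  shows "closing_edge H vs (butlast es) (last es)"
proof -
  let ?n = "length es"
  have len: "length vs = ?n" "?n \<ge> 2" using assms by (auto simp: cycle_walk_def)
  have E: "\<And>i. i < ?n \<Longrightarrow> ends H (es ! i) = {vs ! i, vs ! ((i + 1) mod ?n)}"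
    using assms by (auto simp: cycle_walk_def)
  have ne: "es \<noteq> []" using len by auto
  have d: "distinct es" using assms by (auto simp: cycle_walk_def)
  have "es = butlast es @ [last es]" using ne by simp
  then have dl: "last es \<notin> set (butlast es)" using d
    by (metis distinct_append ne append_butlast_last_id disjoint_iff list.set_intros(1))
  have "ends H (butlast es ! i) = {vs ! i, vs ! Suc i}" if "i < length (butlast es)" for i
    using E[of i] that len by (simp add: nth_butlast)
  moreover have "ends H (last es) = {last vs, hd vs}"
  proof -
    have "last es = es ! (?n - 1)" using ne by (simp add: last_conv_nth)
    moreover have "last vs = vs ! (?n - 1)"
    proof -
      have "vs \<noteq> []" using len by auto
      then show ?thesis using len by (simp add: last_conv_nth)
    qed
    moreover have "hd vs = vs ! 0" using len by (intro hd_conv_nth_length) linarith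
    moreover have "(?n - 1 + 1) mod ?n = 0"
    proof -
      have "?n - 1 + 1 = ?n" using len by linarith
      then show ?thesis by simp
    qed
    ultimately show ?thesis using E[of "?n - 1"] len by simp
  qed
  moreover have "set (butlast es) \<subseteq> edges H" "last es \<in> edges H"
    using assms ne by (auto simp: cycle_walk_def dest: in_set_butlastD)
  moreover have "butlast es \<noteq> []" using len by (cases es rule: rev_cases) auto
  ultimately show ?thesis using assms len dl
    by (auto simp: closing_edge_def is_path_def cycle_walk_def distinct_butlast)
qed

lemma closing_edge_cycle_walk:
  assumes "closing_edge H vs es f"
  shows "cycle_walk H vs (es @ [f])"
proof -
  have g: "is_path H vs es" and ne: "es \<noteq> []" and f: "f \<in> edges H" "f \<notin> set es"
    and ef: "ends H f = {last vs, hd vs}" using assms by (auto simp: closing_edge_def)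
  let ?n = "Suc (length es)"
  have len: "length vs = ?n" using g by (simp add: is_path_def)
  have "ends H ((es @ [f]) ! i) = {vs ! i, vs ! ((i + 1) mod ?n)}" if "i < ?n" for i
  proof (cases "i < length es")
    case True then show ?thesis using g by (simp add: is_path_def nth_append)
  next
    case False
    then have i: "i = length es" using that by simp
    have "last vs = vs ! length es"
    proof -
      have "vs \<noteq> []" using len by auto
      then show ?thesis using len by (simp add: last_conv_nth)
    qed
    moreover have "hd vs = vs ! 0" using len by (simp add: hd_conv_nth_length)
    ultimately show ?thesis using i ef by (auto simp: nth_append)
  qed
  then show ?thesis using g ne f len
    by (auto simp: cycle_walk_def is_path_def Suc_le_eq)
qed

lemma closing_edge_is_cycle:
  assumes "closing_edge H vs es f" shows "is_cycle H (insert f (set es))"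
proof -
  have "cycle_walk H vs (es @ [f])" using closing_edge_cycle_walk[OF assms] .
  moreover have "set (es @ [f]) = insert f (set es)" by simp
  ultimately show ?thesis unfolding is_cycle_iff_cycle_walk by blast
qed

lemma cycle_walk_edge_last:
  assumes "cycle_walk H vs es" "f \<in> set es"
  shows "\<exists>vs' es'. cycle_walk H vs' es' \<and> set es' = set es \<and> set vs' = set vs \<and> last es' = f"
proof -
  obtain j where j: "j < length es" "es ! j = f" using assms(2) by (auto simp: in_set_conv_nth)
  let ?n = "length es"
  define k where "k = Suc j"
  have c: "cycle_walk H (rotate k vs) (rotate k es)" using cycle_walk_rotate assms(1) by blast
  have ne: "es \<noteq> []" using j by auto
  have "last (rotate k es) = rotate k es ! (?n - 1)"
    using ne by (simp add: last_conv_nth)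
  also have "\<dots> = es ! ((k + (?n - 1)) mod ?n)" using ne by (simp add: nth_rotate)
  also have "(k + (?n - 1)) mod ?n = j"
  proof -
    have "k + (?n - 1) = j + ?n" using ne unfolding k_def by (cases es) auto
    then show ?thesis using j by simp
  qed
  finally show ?thesis using c j by (intro exI[of _ "rotate k vs"] exI[of _ "rotate k es"]) auto
qed

lemma cycle_walk_vertex_hd:
  assumes "cycle_walk H vs es" "v \<in> set vs"
  shows "\<exists>vs' es'. cycle_walk H vs' es' \<and> set es' = set es \<and> set vs' = set vs \<and> hd vs' = v"
proof -
  obtain j where j: "j < length vs" "vs ! j = v" using assms(2) by (auto simp: in_set_conv_nth)
  have c: "cycle_walk H (rotate j vs) (rotate j es)" using cycle_walk_rotate assms(1) by blast
  have ne: "vs \<noteq> []" using j by auto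
  have "hd (rotate j vs) = rotate j vs ! 0" using ne by (simp add: hd_conv_nth)
  also have "\<dots> = vs ! j" using ne j by (simp add: nth_rotate)
  finally show ?thesis using c j by (intro exI[of _ "rotate j vs"] exI[of _ "rotate j es"]) auto
qed

lemma is_cycle_closing_edge:
  assumes "is_cycle H C" "f \<in> C"
  shows "\<exists>vs es. closing_edge H vs es f \<and> C = insert f (set es)"
proof -
  obtain vs es where c: "cycle_walk H vs es" "set es = C" using assms(1)[unfolded is_cycle_iff_cycle_walk] by blast
  then obtain vs' es' where c': "cycle_walk H vs' es'" "set es' = C" "last es' = f"
    using cycle_walk_edge_last[OF c(1)] assms(2) c(2) by blast
  have ne: "es' \<noteq> []" using c' by (auto simp: cycle_walk_def)
  have "set es' = set (butlast es' @ [last es'])" using ne by simp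
  then have "C = insert f (set (butlast es'))" using c' by simp
  then show ?thesis using cycle_walk_closing_edge[OF c'(1)] c' by blast
qed

lemma is_path_rev: "is_path H vs es \<Longrightarrow> is_path H (rev vs) (rev es)"
  unfolding is_path_def
proof (intro conjI allI impI; (elim conjE)?)
  fix i assume a: "length vs = Suc (length es)" "\<forall>i<length es. ends H (es ! i) = {vs ! i, vs ! Suc i}"
    "i < length (rev es)"
  have "rev es ! i = es ! (length es - Suc i)" using a by (simp add: rev_nth)
  moreover have "rev vs ! i = vs ! Suc (length es - Suc i)" using a by (simp add: rev_nth Suc_diff_Suc)
  moreover have "rev vs ! Suc i = vs ! (length es - Suc i)" using a by (simp add: rev_nth)
  ultimately show "ends H (rev es ! i) = {rev vs ! i, rev vs ! Suc i}" using a
    by (simp add: insert_commute)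
qed auto

lemma closing_edge_rev: "closing_edge H vs es f \<Longrightarrow> closing_edge H (rev vs) (rev es) f"
  unfolding closing_edge_def using is_path_rev
  by (metis hd_rev insert_commute last_rev rev_is_Nil_conv set_rev)

lemma is_path_take:
  assumes "is_path H vs es" "k \<le> length es"
  shows "is_path H (take (Suc k) vs) (take k es)"
  using assms unfolding is_path_def
  by (auto dest: in_set_takeD)

lemma is_path_drop:
  assumes "is_path H vs es" "k \<le> length es"
  shows "is_path H (drop k vs) (drop k es)"
  using assms unfolding is_path_def
  by (auto dest: in_set_dropD simp: add.commute)

lemma is_path_append:
  assumes "is_path H vs1 es1" "is_path H vs2 es2" "last vs1 = hd vs2"
    "set vs1 \<inter> set (tl vs2) = {}" "set es1 \<inter> set es2 = {}"
  shows "is_path H (vs1 @ tl vs2) (es1 @ es2)"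
proof -
  have l1: "length vs1 = Suc (length es1)" and l2: "length vs2 = Suc (length es2)"
    using assms by (auto simp: is_path_def)
  have E1: "\<And>i. i < length es1 \<Longrightarrow> ends H (es1 ! i) = {vs1 ! i, vs1 ! Suc i}"
    and E2: "\<And>i. i < length es2 \<Longrightarrow> ends H (es2 ! i) = {vs2 ! i, vs2 ! Suc i}"
    using assms by (auto simp: is_path_def)
  have "ends H ((es1 @ es2) ! i) = {(vs1 @ tl vs2) ! i, (vs1 @ tl vs2) ! Suc i}"
    if i: "i < length (es1 @ es2)" for i
  proof (cases "i < length es1")
    case True
    then show ?thesis using E1[of i] l1 by (auto simp: nth_append)
  next
    case False
    define j where "j = i - length es1"
    have j: "j < length es2" using i False j_def by auto
    have "(es1 @ es2) ! i = es2 ! j" using False j_def by (simp add: nth_append)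
    moreover have "(vs1 @ tl vs2) ! Suc i = vs2 ! Suc j"
    proof -
      have "(vs1 @ tl vs2) ! Suc i = tl vs2 ! j" using False j_def l1 by (simp add: nth_append Suc_diff_le)
      also have "\<dots> = vs2 ! Suc j" using j l2 by (simp add: nth_tl)
      finally show ?thesis .
    qed
    moreover have "(vs1 @ tl vs2) ! i = vs2 ! j"
    proof (cases "j = 0")
      case True
      then have "i = length es1" using False j_def by simp
      then have "(vs1 @ tl vs2) ! i = last vs1" using l1 by (simp add: nth_append last_conv_nth_length)
      then show ?thesis using assms(3) True l2 by (simp add: hd_conv_nth_length)
    next
      case False
      then obtain j' where j': "j = Suc j'" by (cases j) auto
      have ii: "i = Suc (length es1 + j')" using j_def \<open>\<not> i < length es1\<close> j' by simp
      have "(vs1 @ tl vs2) ! i = tl vs2 ! j'" using l1 unfolding ii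
        by (simp add: nth_append)
      also have "\<dots> = vs2 ! j" using j' j l2 by (simp add: nth_tl)
      finally show ?thesis .
    qed
    ultimately show ?thesis using E2[OF j] by simp
  qed
  moreover have "distinct (vs1 @ tl vs2)" using assms
    by (auto simp: is_path_def distinct_tl)
  ultimately show ?thesis using assms l1 l2 by (auto simp: is_path_def)
qed

lemma is_path_mono:
  assumes "is_path H vs es" "set es \<subseteq> edges H'" "\<forall>f\<in>set es. ends H' f = ends H f"
  shows "is_path H' vs es"
  using assms unfolding is_path_def by auto

lemma is_path_vertex:
  assumes "is_path H vs es" "es \<noteq> []" "v \<in> set vs"
  shows "\<exists>f\<in>set es. v \<in> ends H f"
proof -
  obtain i where i: "i < length vs" "vs ! i = v" using assms(3) by (auto simp: in_set_conv_nth)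
  have l: "length vs = Suc (length es)" using assms(1) by (simp add: is_path_def)
  show ?thesis
  proof (cases "i < length es")
    case True
    then show ?thesis using assms(1) i by (force simp: is_path_def)
  next
    case False
    then have "i = Suc (length es - 1)" using i l assms(2) by auto
    then show ?thesis using assms i l
      by (auto simp: is_path_def intro!: bexI[of _ "es ! (length es - 1)"])
  qed
qed

lemma cycle_walk_ends_subset:
  assumes "cycle_walk H vs es" "f \<in> set es"
  shows "ends H f \<subseteq> set vs"
proof -
  obtain i where i: "i < length es" "es ! i = f" using assms(2) by (auto simp: in_set_conv_nth)
  have l: "length vs = length es" "length es \<ge> 2" using assms(1) by (auto simp: cycle_walk_def)
  have "ends H f = {vs ! i, vs ! ((i + 1) mod length es)}" using assms(1) i by (auto simp: cycle_walk_def)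
  moreover have "(i + 1) mod length es < length vs" using l by (metis mod_less_divisor le_trans
        one_le_numeral less_le_trans zero_less_one)
  ultimately show ?thesis using i l by auto
qed

lemma cycle_walk_verts:
  assumes "wf_graph H" "cycle_walk H vs es"
  shows "set vs \<subseteq> verts H"
proof
  fix v assume "v \<in> set vs"
  then obtain i where i: "i < length vs" "vs ! i = v" by (auto simp: in_set_conv_nth)
  have l: "length vs = length es" using assms(2) by (auto simp: cycle_walk_def)
  have "ends H (es ! i) = {vs ! i, vs ! ((i + 1) mod length es)}" "es ! i \<in> edges H"
    using assms(2) i l by (auto simp: cycle_walk_def)
  then show "v \<in> verts H" using assms(1) i by (auto simp: wf_graph_def)
qed

lemma is_cycle_mono:
  assumes "is_cycle H' C" "C \<subseteq> edges H" "\<forall>f\<in>C. ends H f = ends H' f"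
  shows "is_cycle H C"
  using assms unfolding is_cycle_def by (metis nth_mem)

lemma is_cycle_sub: "is_cycle H C \<Longrightarrow> C \<subseteq> edges H"
  unfolding is_cycle_def by auto

lemma is_cycle_ne: "is_cycle H C \<Longrightarrow> C \<noteq> {}"
  unfolding is_cycle_def by auto

lemma is_path_verts_ends:
  assumes "is_path H vs es" "es \<noteq> []" "\<forall>f\<in>set es. ends H f \<subseteq> S"
  shows "set vs \<subseteq> S"
  using is_path_vertex[OF assms(1,2)] assms(3) by blast

lemma is_path_verts:
  assumes "wf_graph H" "is_path H vs es" "es \<noteq> []"
  shows "set vs \<subseteq> verts H"
  using is_path_verts_ends[OF assms(2,3)] assms(1,2) by (auto simp: wf_graph_def is_path_def)

lemma is_path_ends_subset:
  assumes "is_path H vs es" "f \<in> set es"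
  shows "ends H f \<subseteq> set vs"
proof -
  obtain i where "i < length es" "f = es ! i" using assms(2) by (auto simp: in_set_conv_nth)
  then show ?thesis using assms(1) unfolding is_path_def by (auto intro!: nth_mem)
qed

lemma is_path_butlast:
  assumes "is_path H vs es" "es \<noteq> []"
  shows "is_path H (butlast vs) (butlast es)" "es = butlast es @ [last es]"
    "vs = butlast vs @ [last vs]" "ends H (last es) = {last (butlast vs), last vs}"
    "hd (butlast vs) = hd vs"
proof -
  let ?m = "length es"
  have l: "length vs = Suc ?m" using assms(1) by (simp add: is_path_def)
  have m0: "0 < ?m" using assms(2) by simp
  have "butlast vs = take (Suc (?m - 1)) vs" "butlast es = take (?m - 1) es"
    using l m0 by (simp_all add: butlast_conv_take)
  then show "is_path H (butlast vs) (butlast es)" using is_path_take[OF assms(1), of "?m - 1"] by simp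
  have "vs \<noteq> []" using l by auto
  then show "es = butlast es @ [last es]" "vs = butlast vs @ [last vs]" using assms(2) by simp_all
  have "ends H (es ! (?m - 1)) = {vs ! (?m - 1), vs ! Suc (?m - 1)}"
    using assms(1) m0 by (simp add: is_path_def)
  moreover have "last es = es ! (?m - 1)" using assms(2) by (simp add: last_conv_nth)
  moreover have "last (butlast vs) = vs ! (?m - 1)"
  proof -
    have "length (butlast vs) = Suc (?m - 1)" using l m0 by simp
    then have "last (butlast vs) = butlast vs ! (?m - 1)" by (rule last_conv_nth_length)
    then show ?thesis using l m0 by (simp add: nth_butlast)
  qed
  moreover have "last vs = vs ! Suc (?m - 1)" using l m0 by (simp add: last_conv_nth_length)
  ultimately show "ends H (last es) = {last (butlast vs), last vs}" by simp
  show "hd (butlast vs) = hd vs" using l m0 by (cases vs) auto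
qed

lemma closing_edge_orient:
  assumes "closing_edge H vs es f" "ends H f = {p, q}"
  shows "\<exists>vs' es'. closing_edge H vs' es' f \<and> set es' = set es \<and> set vs' = set vs \<and> hd vs' = p \<and> last vs' = q"
proof -
  have lh: "{last vs, hd vs} = {p, q}" using assms by (simp add: closing_edge_def)
  have ne: "vs \<noteq> []" using assms(1) by (auto simp: closing_edge_def is_path_def)
  have "last vs \<noteq> hd vs"
  proof
    assume eq: "last vs = hd vs"
    have l: "length vs = Suc (length es)" "es \<noteq> []" "distinct vs" using assms(1) by (auto simp: closing_edge_def is_path_def)
    then have "vs ! length es = vs ! 0" using eq by (simp add: last_conv_nth_length hd_conv_nth_length)
    then show False using l nth_eq_iff_index_eq[of vs "length es" 0] by auto
  qed
  then have "(hd vs = p \<and> last vs = q) \<or> (hd vs = q \<and> last vs = p)" using lh by (auto simp: doubleton_eq_iff)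
  then show ?thesis
  proof
    assume "hd vs = p \<and> last vs = q"
    then show ?thesis using assms(1) by blast
  next
    assume h: "hd vs = q \<and> last vs = p"
    have "closing_edge H (rev vs) (rev es) f" using closing_edge_rev[OF assms(1)] .
    moreover have "hd (rev vs) = p" "last (rev vs) = q" using h ne by (auto simp: hd_rev last_rev)
    ultimately show ?thesis by (intro exI[of _ "rev vs"] exI[of _ "rev es"]) auto
  qed
qed

lemma mod_Suc_of_pred:
  assumes "i < (n::nat)"
  shows "((i + n - 1) mod n + 1) mod n = i"
proof (cases i)
  case 0
  then have "(i + n - 1) mod n = n - 1" using assms by simp
  then show ?thesis using assms 0 by simp
next
  case (Suc k)
  then have "(i + n - 1) mod n = k" using assms by (simp add: add.commute)
  then show ?thesis using assms Suc by simp
qed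

lemma mod_pred_of_Suc:
  assumes "j < (n::nat)" "i = (j + 1) mod n"
  shows "j = (i + n - 1) mod n"
proof (cases "j + 1 < n")
  case True
  then have "i = j + 1" using assms by simp
  then show ?thesis using assms by simp
next
  case False
  then have "j = n - 1" using assms by simp
  then have "i = 0" using assms by simp
  then show ?thesis using \<open>j = n - 1\<close> assms by simp
qed

lemma cycle_walk_two_incident:
  assumes "cycle_walk H vs es" "v \<in> set vs"
  shows "\<exists>f g. f \<noteq> g \<and> f \<in> set es \<and> g \<in> set es \<and> v \<in> ends H f \<and> v \<in> ends H g"
proof -
  let ?n = "length es"
  have l: "length vs = ?n" "2 \<le> ?n" and d: "distinct es" using assms(1) by (auto simp: cycle_walk_def)
  have E: "\<And>i. i < ?n \<Longrightarrow> ends H (es ! i) = {vs ! i, vs ! ((i + 1) mod ?n)}"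
    using assms(1) by (auto simp: cycle_walk_def)
  obtain i where i: "i < ?n" "vs ! i = v" using assms(2) l by (auto simp: in_set_conv_nth)
  define j where "j = (i + ?n - 1) mod ?n"
  have pos: "0 < ?n" using l by linarith
  have j: "j < ?n" unfolding j_def using pos by simp
  have ji: "(j + 1) mod ?n = i" unfolding j_def using mod_Suc_of_pred[OF i(1)] .
  have jne: "j \<noteq> i"
  proof
    assume "j = i"
    then have "(i + 1) mod ?n = i" using ji by simp
    show False
    proof (cases "i + 1 < ?n")
      case True
      then show False using \<open>(i + 1) mod ?n = i\<close> by simp
    next
      case False
      then have "i + 1 = ?n" using i by simp
      then show False using \<open>(i + 1) mod ?n = i\<close> l by simp
    qed
  qed
  have "es ! i \<noteq> es ! j" using d i j jne nth_eq_iff_index_eq by metis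
  moreover have "v \<in> ends H (es ! i)" using E[OF i(1)] i by simp
  moreover have "v \<in> ends H (es ! j)" using E[OF j] ji i by simp
  ultimately show ?thesis using i j by (intro exI[of _ "es ! i"] exI[of _ "es ! j"]) auto
qed

lemma cycle_walk_incident_le2:
  assumes "cycle_walk H vs es"
  shows "card {f \<in> set es. v \<in> ends H f} \<le> 2"
proof (cases "v \<in> set vs")
  case False
  have "{f \<in> set es. v \<in> ends H f} = {}" using cycle_walk_ends_subset[OF assms] False by blast
  then show ?thesis by (simp only: card.empty)
next
  case True
  let ?n = "length es"
  have l: "length vs = ?n" "2 \<le> ?n" and d: "distinct vs" using assms(1) by (auto simp: cycle_walk_def)
  have E: "\<And>i. i < ?n \<Longrightarrow> ends H (es ! i) = {vs ! i, vs ! ((i + 1) mod ?n)}"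
    using assms(1) by (auto simp: cycle_walk_def)
  obtain i where i: "i < ?n" "vs ! i = v" using True l by (auto simp: in_set_conv_nth)
  have pos: "0 < ?n" using l by linarith
  have "{f \<in> set es. v \<in> ends H f} \<subseteq> {es ! i, es ! ((i + ?n - 1) mod ?n)}"
  proof
    fix f assume "f \<in> {f \<in> set es. v \<in> ends H f}"
    then obtain j where j: "j < ?n" "es ! j = f" "v \<in> ends H f" by (auto simp: in_set_conv_nth)
    then have "vs ! i = vs ! j \<or> vs ! i = vs ! ((j + 1) mod ?n)" using E[OF j(1)] i by auto
    then have "i = j \<or> i = (j + 1) mod ?n"
      using d i j l pos nth_eq_iff_index_eq by (metis mod_less_divisor)
    then have "j = i \<or> j = (i + ?n - 1) mod ?n" using mod_pred_of_Suc[OF j(1)] by blast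
    then show "f \<in> {es ! i, es ! ((i + ?n - 1) mod ?n)}" using j by auto
  qed
  moreover have "card {es ! i, es ! ((i + ?n - 1) mod ?n)} \<le> 2" by (simp add: card_insert_if)
  ultimately show ?thesis by (meson card_mono finite.emptyI finite.insertI le_trans)
qed

lemma is_path_ends_union:
  assumes "is_path H vs es" "es \<noteq> []"
  shows "\<Union>(ends H ` set es) = set vs"
proof
  show "\<Union>(ends H ` set es) \<subseteq> set vs"
  proof
    fix v assume "v \<in> \<Union>(ends H ` set es)"
    then obtain i where i: "i < length es" "v \<in> ends H (es ! i)" by (auto simp: in_set_conv_nth)
    then show "v \<in> set vs" using assms(1) by (auto simp: is_path_def)
  qed
  show "set vs \<subseteq> \<Union>(ends H ` set es)" using is_path_vertex[OF assms] by blast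
qed

section \<open>Reachability\<close>

lemma reach_verts:
  assumes "wf_graph G" "reach G F W x y"
  shows "y \<in> verts G - W"
proof -
  have x: "x \<in> verts G - W" and r: "(adj_avoid G F W)\<^sup>*\<^sup>* x y" using assms(2) by (auto simp: reach_def)
  from r show ?thesis
  proof (induction rule: rtranclp_induct)
    case base then show ?case using x by simp
  next
    case (step y z)
    then obtain f where "f \<in> edges G" "ends G f = {y, z}" "z \<notin> W" by (auto simp: adj_avoid_def)
    then show ?case using assms(1) by (auto simp: wf_graph_def)
  qed
qed

lemma reach_trans: "reach G F W x y \<Longrightarrow> reach G F W y z \<Longrightarrow> reach G F W x z"
  unfolding reach_def by auto

lemma adj_sym: "adj_avoid G F W x y \<Longrightarrow> adj_avoid G F W y x"
  unfolding adj_avoid_def by (auto simp: insert_commute)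

lemma reach_sym:
  assumes "wf_graph G" "reach G F W x y"
  shows "reach G F W y x"
proof -
  have y: "y \<in> verts G - W" using reach_verts[OF assms] .
  have "(adj_avoid G F W)\<^sup>*\<^sup>* x y" using assms(2) by (simp add: reach_def)
  then have "(adj_avoid G F W)\<^sup>*\<^sup>* y x"
  proof (induction rule: rtranclp_induct)
    case base then show ?case by simp
  next
    case (step y z)
    have "adj_avoid G F W z y" using step(2) by (rule adj_sym)
    then show ?case using step(3) by (rule converse_rtranclp_into_rtranclp)
  qed
  then show ?thesis using y by (simp add: reach_def)
qed

lemma reach_refl: "x \<in> verts G - W \<Longrightarrow> reach G F W x x"
  unfolding reach_def by auto

lemma reach_adj: "x \<in> verts G - W \<Longrightarrow> adj_avoid G F W x y \<Longrightarrow> reach G F W x y"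
  unfolding reach_def by auto

lemma reach_mono:
  assumes "reach G F W x y" "\<And>u v. adj_avoid G F W u v \<Longrightarrow> adj_avoid G F' W' u v" "x \<notin> W'"
  shows "reach G F' W' x y"
proof -
  have r: "(adj_avoid G F W)\<^sup>*\<^sup>* x y" and "x \<in> verts G" using assms(1) by (auto simp: reach_def)
  from r have "(adj_avoid G F' W')\<^sup>*\<^sup>* x y"
    by (induction rule: rtranclp_induct) (auto intro: rtranclp.rtrancl_into_rtrancl assms(2))
  then show ?thesis using assms \<open>x \<in> verts G\<close> by (auto simp: reach_def)
qed

lemma is_path_reach:
  assumes "wf_graph H" "is_path H vs es" "set es \<inter> F = {}" "set vs \<inter> W = {}" "hd vs \<in> verts H"
  shows "reach H F W (hd vs) (last vs)"
  using assms(2-)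
proof (induction es arbitrary: vs)
  case Nil
  then obtain v where "vs = [v]" by (auto simp: is_path_def length_Suc_conv)
  then show ?case using Nil by (auto intro: reach_refl)
next
  case (Cons f es)
  then obtain v0 vs' where vs: "vs = v0 # vs'" by (cases vs) (auto simp: is_path_def)
  have l: "length vs' = Suc (length es)" using Cons vs by (simp add: is_path_def)
  have g': "is_path H vs' es" using is_path_drop[OF Cons.prems(1), of 1] vs by simp
  have ef: "ends H f = {v0, hd vs'}" using Cons.prems(1) vs l
    by (auto simp: is_path_def hd_conv_nth_length)
  have f: "f \<in> edges H" "f \<notin> F" using Cons.prems by (auto simp: is_path_def)
  have hv: "hd vs' \<in> set vs'" using l by (cases vs') auto
  have "hd vs' \<in> verts H" using assms(1) ef f by (auto simp: wf_graph_def)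
  then have r: "reach H F W (hd vs') (last vs')" using Cons.IH[OF g'] Cons.prems vs by auto
  have "adj_avoid H F W v0 (hd vs')" using ef f Cons.prems(3) vs hv by (auto simp: adj_avoid_def)
  then have "reach H F W v0 (hd vs')" using Cons.prems vs by (auto intro: reach_adj)
  then show ?case using r vs l by (auto intro: reach_trans)
qed

lemma is_path_reach_all:
  assumes "wf_graph H" "is_path H vs es" "set es \<inter> F = {}" "set vs \<inter> W = {}" "hd vs \<in> verts H"
    "v \<in> set vs"
  shows "reach H F W (hd vs) v"
proof -
  obtain i where i: "i < length vs" "vs ! i = v" using assms(6) by (auto simp: in_set_conv_nth)
  have l: "length vs = Suc (length es)" using assms(2) by (simp add: is_path_def)
  have g: "is_path H (take (Suc i) vs) (take i es)" using is_path_take[OF assms(2), of i] i l by simp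
  have "hd (take (Suc i) vs) = hd vs" using i by (cases vs) auto
  moreover have "last (take (Suc i) vs) = v" using i
    by (simp add: last_conv_nth_length)
  moreover have "set (take i es) \<inter> F = {}" "set (take (Suc i) vs) \<inter> W = {}"
    using assms(3,4) by (auto dest: in_set_takeD)
  ultimately show ?thesis using is_path_reach[OF assms(1) g] assms(5) by auto
qed

section \<open>Cycle decompositions\<close>

definition decomps :: "('v, 'e) mgraph \<Rightarrow> 'e set set set" where
  "decomps G = {D. cycle_decomp G D}"

lemma decomps_iff:
  "D \<in> decomps G \<longleftrightarrow> (\<forall>C\<in>D. is_cycle G C) \<and> pairwise disjnt D \<and> \<Union>D = edges G"
  by (auto simp: decomps_def cycle_decomp_def pairwise_def disjnt_def)

lemma pairwise_disjnt_insert: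
  assumes "pairwise disjnt A" "\<And>C. C \<in> A \<Longrightarrow> disjnt Z C"
  shows "pairwise disjnt (insert Z A)"
  using assms unfolding pairwise_insert by (metis disjnt_commute)

lemma pairwise_disjnt_Un:
  assumes "pairwise disjnt A" "pairwise disjnt B" "\<And>C C'. C \<in> A \<Longrightarrow> C' \<in> B \<Longrightarrow> disjnt C C'"
  shows "pairwise disjnt (A \<union> B)"
  using assms unfolding pairwise_def by (metis Un_iff disjnt_commute)

lemma decomps_subset_Pow: "D \<in> decomps G \<Longrightarrow> D \<subseteq> Pow (edges G)"
  unfolding decomps_def cycle_decomp_def by auto

lemma finite_decomps: "finite (edges G) \<Longrightarrow> finite (decomps G)"
  by (rule finite_subset[of _ "Pow (Pow (edges G))"]) (auto dest: decomps_subset_Pow)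

lemma finite_decomp: "finite (edges G) \<Longrightarrow> D \<in> decomps G \<Longrightarrow> finite D"
  using decomps_subset_Pow by (metis finite_Pow_iff finite_subset)

lemma cmin_le_card: "finite (edges G) \<Longrightarrow> D \<in> decomps G \<Longrightarrow> cmin G \<le> card D"
  unfolding cmin_def decomps_def[symmetric] using finite_decomps by (auto intro: Min_le)

lemma card_le_nu: "finite (edges G) \<Longrightarrow> D \<in> decomps G \<Longrightarrow> card D \<le> nu G"
  unfolding nu_def decomps_def[symmetric] using finite_decomps by (auto intro: Max_ge)

lemma cmin_attained: "finite (edges G) \<Longrightarrow> decomps G \<noteq> {} \<Longrightarrow> \<exists>D\<in>decomps G. card D = cmin G"
  unfolding cmin_def decomps_def[symmetric] using finite_decomps
  by (metis (no_types, lifting) Min_in finite_imageI image_iff image_is_empty)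

lemma nu_attained: "finite (edges G) \<Longrightarrow> decomps G \<noteq> {} \<Longrightarrow> \<exists>D\<in>decomps G. card D = nu G"
  unfolding nu_def decomps_def[symmetric] using finite_decomps
  by (metis (no_types, lifting) Max_in finite_imageI image_iff image_is_empty)

lemma cycle_incident_even:
  assumes "is_cycle G C"
  shows "even (card {f \<in> C. v \<in> ends G f})"
proof -
  obtain vs es where c: "cycle_walk G vs es" "set es = C"
    using assms unfolding is_cycle_iff_cycle_walk by blast
  show ?thesis
  proof (cases "v \<in> set vs")
    case False
    then have "{f \<in> C. v \<in> ends G f} = {}" using cycle_walk_ends_subset[OF c(1)] c(2) by blast
    then show ?thesis by (metis card.empty even_zero)
  next
    case True
    obtain f g where fg: "f \<noteq> g" "f \<in> C" "g \<in> C" "v \<in> ends G f" "v \<in> ends G g"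
      using cycle_walk_two_incident[OF c(1) True] c(2) by blast
    have "card {f \<in> C. v \<in> ends G f} \<le> 2" using cycle_walk_incident_le2[OF c(1)] c(2) by simp
    moreover have "card {f, g} \<le> card {f \<in> C. v \<in> ends G f}"
      using fg c(2) by (intro card_mono) auto
    ultimately have "card {f \<in> C. v \<in> ends G f} = 2" using fg(1) by simp
    then show ?thesis by simp
  qed
qed

lemma eulerian_other_edge:
  assumes "wf_graph G" "eulerian G" "l \<in> edges G" "v \<in> ends G l"
  obtains g where "g \<in> edges G" "g \<noteq> l" "v \<in> ends G g"
proof -
  let ?I = "{f \<in> edges G. v \<in> ends G f}"
  have "v \<in> verts G" using assms(1,3,4) by (auto simp: wf_graph_def)
  then have "even (card ?I)" using assms(2) by (simp add: eulerian_def degree_def)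
  moreover have "?I \<noteq> {l}" using calculation by auto
  ultimately show ?thesis using that assms(3,4) by blast
qed

lemma longest_path_exists:
  assumes "wf_graph G" "edges G \<noteq> {}"
  obtains vs es where "is_path G vs es" "es \<noteq> []"
    "\<And>vs' es'. is_path G vs' es' \<Longrightarrow> length es' \<le> length es"
proof -
  define P where "P = (\<lambda>(vs, es). is_path G vs es \<and> es \<noteq> [])"
  obtain f0 where f0: "f0 \<in> edges G" using assms(2) by auto
  then obtain u w where "ends G f0 = {u, w}" "u \<noteq> w" using wf_graph_edgeE[OF assms(1)] by metis
  then have P0: "P ([u, w], [f0])" using f0 unfolding P_def is_path_def by auto
  have len_le: "length es \<le> card (edges G)" if "is_path G vs es" for vs es
  proof -
    have "length es = card (set es)" "set es \<subseteq> edges G"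
      using that by (auto simp: is_path_def distinct_card)
    then show ?thesis using assms(1) by (simp add: card_mono wf_graph_def)
  qed
  have bound: "\<forall>y. P y \<longrightarrow> (\<lambda>(vs, es). length es) y < Suc (card (edges G))"
    using len_le by (auto simp: P_def less_Suc_eq_le)
  obtain y where "P y" "\<forall>z. P z \<longrightarrow> (\<lambda>(vs, es). length es) z \<le> (\<lambda>(vs, es). length es) y"
    using ex_has_greatest_nat[where P = P and f = "\<lambda>(vs, es). length es", OF P0 bound] by blast
  then show ?thesis using that unfolding P_def
    by (cases y) (metis (mono_tags, lifting) case_prod_conv le0 length_0_conv)
qed

text \<open>The last vertex of a longest path has a second incident edge; its other end lies on the
  path by maximality, so the edge closes a cycle.\<close>
lemma eulerian_has_cycle:
  assumes wf: "wf_graph G" and eu: "eulerian G" and ne: "edges G \<noteq> {}"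
  obtains C where "is_cycle G C"
proof -
  obtain vs es where g: "is_path G vs es" and nes: "es \<noteq> []"
    and maxl: "\<And>vs' es'. is_path G vs' es' \<Longrightarrow> length es' \<le> length es"
    using longest_path_exists[OF wf ne] by blast
  let ?m = "length es"
  have lv: "length vs = Suc ?m" and dv: "distinct vs" using g by (auto simp: is_path_def)
  define v where "v = last vs"
  have vm: "vs ! ?m = v" using lv unfolding v_def by (simp add: last_conv_nth_length)
  define l where "l = es ! (?m - 1)"
  have lE: "l \<in> edges G" using g nes unfolding l_def is_path_def by auto
  have "ends G l = {vs ! (?m - 1), vs ! Suc (?m - 1)}" using g nes by (simp add: is_path_def l_def)
  then have "v \<in> ends G l" using nes vm by simp
  then obtain g0 where g0: "g0 \<in> edges G" "g0 \<noteq> l" "v \<in> ends G g0"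
    using eulerian_other_edge[OF wf eu lE] by blast
  have g0n: "g0 \<notin> set es"
  proof
    assume "g0 \<in> set es"
    then obtain i where i: "i < ?m" "es ! i = g0" by (auto simp: in_set_conv_nth)
    have "ends G g0 = {vs ! i, vs ! Suc i}" using g i by (auto simp: is_path_def)
    then have "vs ! ?m = vs ! i \<or> vs ! ?m = vs ! Suc i" using g0(3) vm by auto
    then have "?m = i \<or> ?m = Suc i" using nth_eq_iff_index_eq[OF dv] lv i by (metis Suc_mono lessI less_SucI)
    then show False using i g0(2) unfolding l_def by auto
  qed
  obtain w where w: "ends G g0 = {v, w}" "v \<noteq> w"
  proof -
    obtain p q where "ends G g0 = {p, q}" "p \<noteq> q" using wf_graph_edgeE[OF wf g0(1)] by metis
    then show ?thesis using g0(3) that by (auto simp: insert_commute)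
  qed
  have "w \<in> set vs"
  proof (rule ccontr)
    assume wn: "w \<notin> set vs"
    have vw: "is_path G [v, w] [g0]" using w g0 unfolding is_path_def by auto
    have "is_path G (vs @ tl [v, w]) (es @ [g0])"
      by (rule is_path_append[OF g vw]) (use wn g0n in \<open>simp_all add: v_def\<close>)
    then show False using maxl by fastforce
  qed
  then obtain j where j: "j < length vs" "vs ! j = w" by (auto simp: in_set_conv_nth)
  have jm: "j < ?m" using j vm w lv by (cases "j = ?m") auto
  have "closing_edge G (drop j vs) (drop j es) g0"
    unfolding closing_edge_def
  proof (intro conjI)
    show "is_path G (drop j vs) (drop j es)" using is_path_drop[OF g] jm by simp
    show "drop j es \<noteq> []" "g0 \<in> edges G" using jm g0 by simp_all
    show "g0 \<notin> set (drop j es)" using g0n by (auto dest: in_set_dropD)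
    have "last (drop j vs) = v" "hd (drop j vs) = w"
      using jm lv j unfolding v_def by (simp_all add: hd_drop_conv_nth)
    then show "ends G g0 = {last (drop j vs), hd (drop j vs)}" using w by simp
  qed
  then show ?thesis by (rule that[OF closing_edge_is_cycle])
qed

lemma eulerian_minus_cycle:
  assumes "wf_graph G" "eulerian G" "is_cycle G C"
  shows "eulerian (G\<lparr>edges := edges G - C\<rparr>)"
  unfolding eulerian_def
proof
  fix v assume "v \<in> verts (G\<lparr>edges := edges G - C\<rparr>)"
  then have "even (degree G v)" using assms(2) by (simp add: eulerian_def)
  moreover have "C \<subseteq> edges G" using is_cycle_sub[OF assms(3)] .
  then have "degree G v = card {f \<in> edges G - C. v \<in> ends G f} + card {f \<in> C. v \<in> ends G f}"
    unfolding degree_def using assms(1)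
    by (subst card_Un_disjoint[symmetric]) (auto simp: wf_graph_def intro: finite_subset arg_cong[where f = card])
  moreover have "even (card {f \<in> C. v \<in> ends G f})" using cycle_incident_even[OF assms(3)] .
  ultimately show "even (degree (G\<lparr>edges := edges G - C\<rparr>) v)" by (simp add: degree_def)
qed

lemma decomps_insert_cycle:
  assumes "is_cycle G C" "D \<in> decomps (G\<lparr>edges := edges G - C\<rparr>)"
  shows "insert C D \<in> decomps G"
proof -
  have "is_cycle G C'" if "C' \<in> D" for C'
  proof -
    have c': "is_cycle (G\<lparr>edges := edges G - C\<rparr>) C'"
      using assms(2) that by (simp add: decomps_def cycle_decomp_def)
    show ?thesis using is_cycle_mono[OF c'] is_cycle_sub[OF c'] by auto
  qed
  then show ?thesis using assms is_cycle_sub[OF assms(1)]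
    unfolding decomps_def cycle_decomp_def by auto
qed

lemma eulerian_decomps_nonempty:
  assumes "wf_graph G" "eulerian G"
  shows "decomps G \<noteq> {}"
  using assms
proof (induction "card (edges G)" arbitrary: G rule: less_induct)
  case less
  show ?case
  proof (cases "edges G = {}")
    case True
    then have "{} \<in> decomps G" by (simp add: decomps_def cycle_decomp_def)
    then show ?thesis by blast
  next
    case False
    obtain C where C: "is_cycle G C" using eulerian_has_cycle[OF less.prems False] .
    define G' where "G' = G\<lparr>edges := edges G - C\<rparr>"
    have "wf_graph G'" using less.prems(1) unfolding G'_def wf_graph_def by auto
    moreover have "eulerian G'" unfolding G'_def using eulerian_minus_cycle[OF less.prems C] .
    moreover have "card (edges G') < card (edges G)"
      using less.prems(1) is_cycle_sub[OF C] is_cycle_ne[OF C] unfolding G'_def wf_graph_def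
      by (auto intro!: psubset_card_mono)
    ultimately obtain D' where "D' \<in> decomps G'" using less.hyps by blast
    then show ?thesis using decomps_insert_cycle[OF C] unfolding G'_def by blast
  qed
qed

section \<open>Cycle graphs and gluing\<close>

lemma cycle_graph_unique_cycle:
  assumes A: "is_cycle_graph A" and C: "is_cycle A C"
  shows "C = edges A"
proof -
  obtain vs0 es0 where c0: "cycle_walk A vs0 es0" "set es0 = edges A"
    using A unfolding is_cycle_graph_def is_cycle_iff_cycle_walk by blast
  obtain vs es where c: "cycle_walk A vs es" "set es = C" using C unfolding is_cycle_iff_cycle_walk by blast
  let ?n = "length es0"
  have l0: "length vs0 = ?n" "2 \<le> ?n" using c0(1) by (auto simp: cycle_walk_def)
  have pos: "0 < ?n" using l0 by linarith
  have E0: "\<And>i. i < ?n \<Longrightarrow> ends A (es0 ! i) = {vs0 ! i, vs0 ! ((i + 1) mod ?n)}"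
    using c0(1) by (auto simp: cycle_walk_def)
  have Csub: "C \<subseteq> edges A" using is_cycle_sub[OF C] .
  have closedC: "g \<in> C" if f: "f \<in> C" and vf: "v \<in> ends A f" and g: "g \<in> edges A" and vg: "v \<in> ends A g" for f g v
  proof -
    have vv: "v \<in> set vs" using cycle_walk_ends_subset[OF c(1)] f vf c(2) by auto
    obtain f1 g1 where fg: "f1 \<noteq> g1" "f1 \<in> C" "g1 \<in> C" "v \<in> ends A f1" "v \<in> ends A g1"
      using cycle_walk_two_incident[OF c(1) vv] c(2) by blast
    let ?S = "{h \<in> set es0. v \<in> ends A h}"
    have "{f1, g1} \<subseteq> {h \<in> C. v \<in> ends A h}" using fg by auto
    moreover have "{h \<in> C. v \<in> ends A h} \<subseteq> ?S" using Csub c0(2) by auto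
    ultimately have sub: "{f1, g1} \<subseteq> ?S" by blast
    have "card ?S \<le> 2" using cycle_walk_incident_le2[OF c0(1)] .
    moreover have "card {f1, g1} = 2" using fg by simp
    moreover have "finite ?S" by simp
    ultimately have "{f1, g1} = ?S" using sub by (metis card_seteq)
    moreover have "g \<in> ?S" using g vg c0(2) by auto
    ultimately show "g \<in> C" using fg by auto
  qed
  obtain f0 where f0: "f0 \<in> C" using is_cycle_ne[OF C] by auto
  then have "f0 \<in> set es0" using Csub c0(2) by auto
  then obtain j0 where j0: "j0 < ?n" "es0 ! j0 = f0" by (auto simp: in_set_conv_nth)
  have step: "es0 ! ((j + 1) mod ?n) \<in> C" if "j < ?n" "es0 ! j \<in> C" for j
  proof (rule closedC[OF that(2)])
    show "vs0 ! ((j + 1) mod ?n) \<in> ends A (es0 ! j)" using E0[OF that(1)] by simp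
    show "es0 ! ((j + 1) mod ?n) \<in> edges A" using c0(2) pos by (metis mod_less_divisor nth_mem)
    have "(j + 1) mod ?n < ?n" using pos by simp
    then show "vs0 ! ((j + 1) mod ?n) \<in> ends A (es0 ! ((j + 1) mod ?n))" using E0 by simp
  qed
  have all: "es0 ! ((j0 + d) mod ?n) \<in> C" for d
  proof (induction d)
    case 0 then show ?case using j0 f0 by simp
  next
    case (Suc d)
    have "es0 ! (((j0 + d) mod ?n + 1) mod ?n) \<in> C" using step[OF _ Suc] pos by simp
    moreover have "((j0 + d) mod ?n + 1) mod ?n = (j0 + Suc d) mod ?n" by (simp add: mod_Suc_eq)
    ultimately show ?case by simp
  qed
  have "edges A \<subseteq> C"
  proof
    fix f assume "f \<in> edges A"
    then have "f \<in> set es0" using c0(2) by simp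
    then obtain j where j: "j < ?n" "es0 ! j = f" by (auto simp: in_set_conv_nth)
    have "(j0 + (j + ?n - j0)) mod ?n = j" using j j0 by simp
    then show "f \<in> C" using all[of "j + ?n - j0"] j by simp
  qed
  then show ?thesis using Csub by auto
qed

lemma cycle_graph_decomps:
  assumes A: "is_cycle_graph A"
  shows "decomps A = {{edges A}}"
proof -
  have cA: "is_cycle A (edges A)" using A by (simp add: is_cycle_graph_def)
  have "{edges A} \<in> decomps A" using cA by (simp add: decomps_def cycle_decomp_def)
  moreover have "D = {edges A}" if D: "D \<in> decomps A" for D
  proof -
    have cy: "\<And>C. C \<in> D \<Longrightarrow> C = edges A"
      using D cycle_graph_unique_cycle[OF A] by (auto simp: decomps_def cycle_decomp_def)
    have "\<Union>D = edges A" using D by (simp add: decomps_def cycle_decomp_def)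
    moreover have "edges A \<noteq> {}" using is_cycle_ne[OF cA] .
    ultimately have "D \<noteq> {}" by auto
    then show ?thesis using cy by auto
  qed
  ultimately show ?thesis by blast
qed

lemma cmin_cycle_graph: "is_cycle_graph A \<Longrightarrow> cmin A = 1"
  unfolding cmin_def decomps_def[symmetric] by (simp add: cycle_graph_decomps)

lemma nu_cycle_graph: "is_cycle_graph A \<Longrightarrow> nu A = 1"
  unfolding nu_def decomps_def[symmetric] by (simp add: cycle_graph_decomps)

lemma wf_graph_glue:
  assumes "wf_graph A" "wf_graph B"
  shows "wf_graph (glue A B x)"
  using assms unfolding wf_graph_def glue_def by auto

lemma closing_edge_ends_union:
  assumes "closing_edge H vs es f"
  shows "\<Union>(ends H ` insert f (set es)) = set vs"
proof -
  have g: "is_path H vs es" "es \<noteq> []" and "ends H f = {last vs, hd vs}"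
    using assms by (auto simp: closing_edge_def)
  moreover have "vs \<noteq> []" using g by (auto simp: is_path_def)
  ultimately show ?thesis using is_path_ends_union[OF g] by auto
qed

text \<open>Close the A-path p \<dots> q around x by the B-path q \<dots> p minus its last edge g; then g closes
  the combined path. The paths meet only in p and q because A and B share only the ends of x.\<close>
lemma is_cycle_graph_glue:
  assumes A: "is_cycle_graph A" and B: "is_cycle_graph B" and xA: "x \<in> edges A" and xB: "x \<in> edges B"
    and eAB: "edges A \<inter> edges B = {x}" and endx: "ends A x = ends B x"
    and vAB: "verts A \<inter> verts B \<subseteq> ends A x"
  shows "is_cycle_graph (glue A B x)"
proof -
  define G where "G = glue A B x"
  have vG: "verts G = verts A \<union> verts B" and eG: "edges G = (edges A \<union> edges B) - {x}"
    and nG: "\<And>f. ends G f = (if f \<in> edges A then ends A f else ends B f)"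
    unfolding G_def glue_def by auto
  have cA: "is_cycle A (edges A)" and cB: "is_cycle B (edges B)"
    using A B by (auto simp: is_cycle_graph_def)
  obtain vs1 es1 where cl1: "closing_edge A vs1 es1 x" and EA: "edges A = insert x (set es1)"
    using is_cycle_closing_edge[OF cA xA] by blast
  define p where "p = hd vs1"
  define q where "q = last vs1"
  have g1: "is_path A vs1 es1" and ne1: "es1 \<noteq> []" and xn1: "x \<notin> set es1"
    and ex: "ends B x = {q, p}"
    using cl1 endx unfolding closing_edge_def p_def q_def by auto
  obtain vs0 es0 where cl0: "closing_edge B vs0 es0 x" "edges B = insert x (set es0)"
    using is_cycle_closing_edge[OF cB xB] by blast
  obtain vs2 es2 where cl2: "closing_edge B vs2 es2 x" and EB: "edges B = insert x (set es2)"
    and h2: "hd vs2 = q" and l2: "last vs2 = p"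
    using closing_edge_orient[OF cl0(1) ex] cl0(2) by blast
  have g2: "is_path B vs2 es2" and ne2: "es2 \<noteq> []" and xn2: "x \<notin> set es2"
    using cl2 unfolding closing_edge_def by auto
  define vs where "vs = butlast vs2"
  define es where "es = butlast es2"
  define g where "g = last es2"
  have gp: "is_path B vs es" and es2_eq: "es2 = es @ [g]" and vs2_eq: "vs2 = vs @ [p]"
    and eg: "ends B g = {last vs, p}" and hq: "hd vs = q"
    using is_path_butlast[OF g2 ne2] l2 h2 unfolding vs_def es_def g_def by simp_all
  have dv2: "distinct vs2" and de2: "distinct es2" using g2 by (auto simp: is_path_def)
  have vsq: "vs = q # tl vs" using gp hq by (cases vs) (auto simp: is_path_def)
  have VA: "verts A = set vs1" and VB: "verts B = set vs2"
    using A B EA EB closing_edge_ends_union[OF cl1] closing_edge_ends_union[OF cl2]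
    by (simp_all add: is_cycle_graph_def)
  have gnA: "g \<notin> edges A" and gx: "g \<noteq> x" using EB es2_eq xn2 eAB by auto
  have es1A: "set es1 \<subseteq> edges A - {x}" and esB: "set es \<subseteq> edges B - edges A"
    using EA EB xn1 xn2 es2_eq eAB by auto
  have "is_path G (vs1 @ tl vs) (es1 @ es)"
  proof (rule is_path_append)
    show "is_path G vs1 es1" by (rule is_path_mono[OF g1]) (use es1A eG nG in auto)
    show "is_path G vs es" by (rule is_path_mono[OF gp]) (use esB eG nG xA in auto)
    show "last vs1 = hd vs" using hq q_def by simp
    have "v \<notin> set vs1" if v: "v \<in> set (tl vs)" for v
    proof -
      have "v \<noteq> q" using v vsq dv2 vs2_eq by (metis distinct.simps(2) distinct_append)
      moreover have "v \<in> set vs" using v vsq by (metis list.set_intros(2))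
      then have "v \<noteq> p" using dv2 vs2_eq by auto
      moreover have "v \<in> verts B" using v vsq VB vs2_eq by (metis Un_iff list.set_intros(2) set_append)
      ultimately show ?thesis using VA vAB endx ex by blast
    qed
    then show "set vs1 \<inter> set (tl vs) = {}" by blast
    show "set es1 \<inter> set es = {}" using es1A esB by blast
  qed
  moreover have "last (vs1 @ tl vs) = last vs" using vsq q_def by (cases "tl vs = []") (auto simp: last_tl)
  moreover have "hd (vs1 @ tl vs) = p" using g1 unfolding p_def by (cases vs1) (auto simp: is_path_def)
  ultimately have ccl: "closing_edge G (vs1 @ tl vs) (es1 @ es) g"
    using ne1 eG nG gnA gx eg de2 es2_eq EB es1A by (auto simp: closing_edge_def)
  have EG: "edges G = insert g (set (es1 @ es))" using eG EA EB es2_eq xn1 xn2 by auto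
  have "vs1 \<noteq> []" using g1 by (auto simp: is_path_def)
  then have "p \<in> set vs1" "q \<in> set vs1" unfolding p_def q_def by simp_all
  moreover have "set vs = insert q (set (tl vs))" using vsq by (metis list.simps(15))
  ultimately have "verts G = set (vs1 @ tl vs)" using vG VA VB vs2_eq by auto
  then show ?thesis
    using closing_edge_is_cycle[OF ccl] closing_edge_ends_union[OF ccl] EG
    unfolding is_cycle_graph_def G_def by simp
qed

section \<open>Splitting at a vertex-edge separator\<close>

locale ve_separation =
  fixes H :: "('v, 'e) mgraph" and c :: 'v and e :: 'e and a b :: 'v
  assumes wf: "wf_graph H" and bic: "biconnected H" and cv: "c \<in> verts H" and ee: "e \<in> edges H"
    and ncon: "\<not> connected_avoid H {e} {c}" and eab: "ends H e = {a, b}"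
begin

text \<open>In the notation of the 2.5-split, Ca and Cb are the vertex sets of the components C_a and
  C_b of H - e - c, and Ea, Eb are the edge sets of H_a and H_b.\<close>
definition "Ca = comp H c e a"
definition "Cb = comp H c e b"
definition "Ea = {f \<in> edges H. ends H f \<subseteq> Ca \<union> {c}}"
definition "Eb = {f \<in> edges H. ends H f \<subseteq> Cb \<union> {c}}"

lemma a_neq_b: "a \<noteq> b"
  using wf ee eab by (auto simp: wf_graph_def)

lemma a_b_verts: "a \<in> verts H" "b \<in> verts H"
  using wf ee eab by (auto simp: wf_graph_def)

lemma edge_ends_wf: "f \<in> edges H \<Longrightarrow> card (ends H f) = 2 \<and> ends H f \<subseteq> verts H"
  using wf by (auto simp: wf_graph_def)

lemma reach_minus_c:
  assumes "u \<in> verts H - {c}" "v \<in> verts H - {c}"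
  shows "reach H {} {c} u v"
proof (cases "u = v")
  case True then show ?thesis using assms by (auto intro: reach_refl)
next
  case False
  then show ?thesis using bic assms cv unfolding biconnected_def by auto
qed

lemma c_neq: "c \<noteq> a" "c \<noteq> b"
proof -
  have "connected_avoid H {e} {c}" if cab: "c \<in> {a, b}"
  proof -
    have adj: "adj_avoid H {e} {c} u v" if aa: "adj_avoid H {} {c} u v" for u v
    proof -
      obtain f where f: "f \<in> edges H" "ends H f = {u, v}" "u \<noteq> c" "v \<noteq> c"
        using aa unfolding adj_avoid_def by blast
      have "f \<noteq> e" using f cab eab by auto
      then show ?thesis using f by (auto simp: adj_avoid_def)
    qed
    have "verts H - {c} \<noteq> {}" using a_b_verts a_neq_b cab by auto
    moreover have "reach H {e} {c} u v" if "u \<in> verts H - {c}" "v \<in> verts H - {c}" for u v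
      using reach_mono[OF reach_minus_c[OF that] adj] that by auto
    ultimately show ?thesis unfolding connected_avoid_def by auto
  qed
  then show "c \<noteq> a" "c \<noteq> b" using ncon by auto
qed

lemma a_in_Ca: "a \<in> Ca" and b_in_Cb: "b \<in> Cb"
  using a_b_verts c_neq by (auto simp: Ca_def Cb_def comp_def intro!: reach_refl)

lemma reach_Ca: "u \<in> Ca \<Longrightarrow> reach H {e} {c} u w \<Longrightarrow> w \<in> Ca"
  unfolding Ca_def comp_def by (auto intro: reach_trans)

lemma reach_Cb: "u \<in> Cb \<Longrightarrow> reach H {e} {c} u w \<Longrightarrow> w \<in> Cb"
  unfolding Cb_def comp_def by (auto intro: reach_trans)

lemma Ca_Cb_subset: "Ca \<subseteq> verts H - {c}" "Cb \<subseteq> verts H - {c}"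
  unfolding Ca_def Cb_def comp_def using reach_verts[OF wf] by blast+

lemma verts_minus_c_cover:
  assumes "v \<in> verts H - {c}"
  shows "v \<in> Ca \<or> v \<in> Cb"
proof -
  have av: "a \<in> verts H - {c}" using a_b_verts c_neq by auto
  have r: "(adj_avoid H {} {c})\<^sup>*\<^sup>* a v" using reach_minus_c[OF av assms] by (simp add: reach_def)
  then show ?thesis
  proof (induction rule: rtranclp_induct)
    case base then show ?case using a_in_Ca by simp
  next
    case (step u w)
    obtain f where f: "f \<in> edges H" "ends H f = {u, w}" "u \<noteq> c" "w \<noteq> c"
      using step(2) by (auto simp: adj_avoid_def)
    have uv: "u \<in> verts H - {c}" using step(3) Ca_Cb_subset by auto
    show ?case
    proof (cases "f = e")
      case True
      then have "w \<in> {a, b}" using f eab by auto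
      then show ?thesis using a_in_Ca b_in_Cb by auto
    next
      case False
      then have "adj_avoid H {e} {c} u w" using f by (auto simp: adj_avoid_def)
      then have "reach H {e} {c} u w" using uv by (rule reach_adj[rotated])
      then show ?thesis using step(3) reach_Ca reach_Cb by blast
    qed
  qed
qed

lemma Ca_Cb_disjoint: "Ca \<inter> Cb = {}"
proof (rule ccontr)
  assume "Ca \<inter> Cb \<noteq> {}"
  then obtain v where v: "v \<in> Ca" "v \<in> Cb" by auto
  have rav: "reach H {e} {c} a v" using v by (simp add: Ca_def comp_def)
  have rbv: "reach H {e} {c} b v" using v by (simp add: Cb_def comp_def)
  have rab: "reach H {e} {c} a b" using reach_trans[OF rav reach_sym[OF wf rbv]] .
  have allC: "w \<in> Ca" if "w \<in> verts H - {c}" for w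
    using verts_minus_c_cover[OF that]
  proof
    assume "w \<in> Cb"
    then have "reach H {e} {c} b w" by (simp add: Cb_def comp_def)
    then show "w \<in> Ca" using reach_trans[OF rab] by (simp add: Ca_def comp_def)
  qed simp
  have "connected_avoid H {e} {c}"
    unfolding connected_avoid_def
  proof (intro conjI ballI)
    show "verts H - {c} \<noteq> {}" using a_b_verts c_neq by auto
  next
    fix u w assume "u \<in> verts H - {c}" "w \<in> verts H - {c}"
    then have r1: "reach H {e} {c} a u" and r2: "reach H {e} {c} a w" using allC by (auto simp: Ca_def comp_def)
    show "reach H {e} {c} u w" using reach_trans[OF reach_sym[OF wf r1] r2] .
  qed
  then show False using ncon by simp
qed

lemma edge_side:
  assumes "f \<in> edges H" "f \<noteq> e"
  shows "ends H f \<subseteq> Ca \<union> {c} \<or> ends H f \<subseteq> Cb \<union> {c}"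
proof -
  obtain u w where uw: "ends H f = {u, w}" "u \<noteq> w" and uwv: "u \<in> verts H" "w \<in> verts H"
    using wf assms(1) by (rule wf_graph_edgeE)
  show ?thesis
  proof (cases "c \<in> {u, w}")
    case True
    then show ?thesis using verts_minus_c_cover uwv uw by auto
  next
    case False
    then have adj: "adj_avoid H {e} {c} u w" using uw assms by (auto simp: adj_avoid_def)
    have r: "reach H {e} {c} u w" using reach_adj[OF _ adj] uwv False by auto
    have "u \<in> Ca \<or> u \<in> Cb" using verts_minus_c_cover uwv False by auto
    then show ?thesis using reach_Ca[OF _ r] reach_Cb[OF _ r] uw by auto
  qed
qed

lemma Ea_Eb_disjoint: "Ea \<inter> Eb = {}"
proof -
  have False if "f \<in> Ea" "f \<in> Eb" for f
  proof -
    have "ends H f \<subseteq> {c}" using that Ca_Cb_disjoint by (auto simp: Ea_def Eb_def)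
    moreover have "card (ends H f) = 2" using that edge_ends_wf by (auto simp: Ea_def)
    ultimately show False by (metis card.empty card.insert card_mono empty_iff finite.intros(1)
        finite.insertI le_antisym subset_singleton_iff zero_neq_numeral n_not_Suc_n numeral_2_eq_2)
  qed
  then show ?thesis by auto
qed

lemma e_notin_Ea_Eb: "e \<notin> Ea" "e \<notin> Eb"
  using eab Ca_Cb_disjoint a_in_Ca b_in_Cb c_neq Ca_Cb_subset by (auto simp: Ea_def Eb_def)

lemma edges_split: "edges H = insert e (Ea \<union> Eb)"
  using edge_side ee by (auto simp: Ea_def Eb_def)

lemma Ea_sub: "Ea \<subseteq> edges H" and Eb_sub: "Eb \<subseteq> edges H"
  by (auto simp: Ea_def Eb_def)

lemma verts_split: "verts H = insert c (Ca \<union> Cb)"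
  using verts_minus_c_cover Ca_Cb_subset cv by auto

lemma path_one_side:
  assumes "is_path H p ps" "e \<notin> set ps" "c \<notin> set p" "p \<noteq> []" "set p \<subseteq> verts H"
  shows "set p \<subseteq> Ca \<or> set p \<subseteq> Cb"
proof -
  have h: "hd p \<in> verts H - {c}" using assms(3-5) by (cases p) auto
  have r: "\<And>v. v \<in> set p \<Longrightarrow> reach H {e} {c} (hd p) v"
    using is_path_reach_all[OF wf assms(1)] assms(2,3) h by blast
  from verts_minus_c_cover[OF h] show ?thesis
  proof
    assume "hd p \<in> Ca" then show ?thesis using r reach_Ca by blast
  next
    assume "hd p \<in> Cb" then show ?thesis using r reach_Cb by blast
  qed
qed

lemma cycle_avoiding_e_one_side:
  assumes "is_cycle H C" "e \<notin> C"
  shows "C \<subseteq> Ea \<or> C \<subseteq> Eb"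
proof -
  obtain vs es where c0: "cycle_walk H vs es" "set es = C" using assms(1)[unfolded is_cycle_iff_cycle_walk] by blast
  have side: "set vs - {c} \<subseteq> Ca \<or> set vs - {c} \<subseteq> Cb"
  proof (cases "c \<in> set vs")
    case True
    obtain vs' es' where c': "cycle_walk H vs' es'" "set es' = set es" "set vs' = set vs" "hd vs' = c"
      using cycle_walk_vertex_hd[OF c0(1) True] by blast
    have cl: "closing_edge H vs' (butlast es') (last es')" using cycle_walk_closing_edge[OF c'(1)] .
    have g: "is_path H vs' (butlast es')" using cl by (simp add: closing_edge_def)
    have lv: "length vs' \<ge> 2" "length vs' = Suc (length (butlast es'))"
      using c'(1) g by (auto simp: cycle_walk_def is_path_def)
    have g1: "is_path H (drop 1 vs') (drop 1 (butlast es'))" using is_path_drop[OF g, of 1] lv by simp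
    have dv: "distinct vs'" using c'(1) by (simp add: cycle_walk_def)
    have sv: "set (drop 1 vs') = set vs' - {c}"
      using dv c'(4) lv by (cases vs') auto
    have "set (drop 1 vs') \<subseteq> Ca \<or> set (drop 1 vs') \<subseteq> Cb"
    proof (rule path_one_side[OF g1])
      show "e \<notin> set (drop 1 (butlast es'))" using assms(2) c0(2) c'(2)
        by (auto dest: in_set_dropD in_set_butlastD)
      show "c \<notin> set (drop 1 vs')" using sv by simp
      show "drop 1 vs' \<noteq> []" using lv by simp
      show "set (drop 1 vs') \<subseteq> verts H" using cycle_walk_verts[OF wf c'(1)] by (auto dest: in_set_dropD)
    qed
    then show ?thesis using sv c'(3) by simp
  next
    case False
    have cl: "closing_edge H vs (butlast es) (last es)" using cycle_walk_closing_edge[OF c0(1)] .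
    have g: "is_path H vs (butlast es)" using cl by (simp add: closing_edge_def)
    have "set vs \<subseteq> Ca \<or> set vs \<subseteq> Cb"
    proof (rule path_one_side[OF g])
      show "e \<notin> set (butlast es)" using assms(2) c0(2) by (auto dest: in_set_butlastD)
      show "c \<notin> set vs" using False .
      show "vs \<noteq> []" using c0(1) by (auto simp: cycle_walk_def)
      show "set vs \<subseteq> verts H" using cycle_walk_verts[OF wf c0(1)] .
    qed
    then show ?thesis by auto
  qed
  have "\<And>f. f \<in> C \<Longrightarrow> ends H f \<subseteq> set vs" using cycle_walk_ends_subset[OF c0(1)] c0(2) by blast
  moreover have "C \<subseteq> edges H" using is_cycle_sub[OF assms(1)] .
  ultimately show ?thesis using side unfolding Ea_def Eb_def by blast
qed

lemma path_a_b_through_c: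
  assumes g: "is_path H vs es" and hv: "hd vs = a" and lv: "last vs = b" and en: "e \<notin> set es"
  obtains k where "0 < k" "k < length es" "vs ! k = c"
    "set (take k es) \<subseteq> Ea" "set (drop k es) \<subseteq> Eb"
proof -
  let ?m = "length es"
  have l: "length vs = Suc ?m" and dv: "distinct vs" using g by (auto simp: is_path_def)
  have v0: "vs ! 0 = a" and vm: "vs ! ?m = b"
    using hv lv l by (simp_all add: hd_conv_nth_length last_conv_nth_length)
  have ne: "es \<noteq> []" using v0 vm a_neq_b by auto
  have vsv: "set vs \<subseteq> verts H" using is_path_verts[OF wf g ne] .
  have "c \<in> set vs"
  proof (rule ccontr)
    assume "c \<notin> set vs"
    then have "reach H {e} {c} (hd vs) (last vs)"
      using is_path_reach[OF wf g] en vsv l by (cases vs) auto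
    then have "b \<in> Ca" using hv lv by (simp add: Ca_def comp_def)
    then show False using b_in_Cb Ca_Cb_disjoint by auto
  qed
  then obtain k where k: "k < length vs" "vs ! k = c" by (auto simp: in_set_conv_nth)
  have k0: "0 < k" using k(2) v0 c_neq by (cases k) auto
  have km: "k < ?m" using k l vm c_neq by (cases "k = ?m") auto
  have "distinct (take k vs @ vs ! k # drop (Suc k) vs)" using dv k(1) by (simp add: id_take_nth_drop[symmetric])
  then have c_notin: "c \<notin> set (take k vs)" "c \<notin> set (drop (Suc k) vs)" using k(2) by auto
  have "take k vs \<noteq> []" "hd (take k vs) = a" using k0 l hv by (cases vs; simp)+
  then have a_take: "a \<in> set (take k vs)" by (metis hd_in_set)
  have "drop (Suc k) vs \<noteq> []" "last (drop (Suc k) vs) = b" using km l lv by simp_all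
  then have b_drop: "b \<in> set (drop (Suc k) vs)" by (metis last_in_set)
  have "set (take k vs) \<subseteq> Ca \<or> set (take k vs) \<subseteq> Cb"
  proof (rule path_one_side)
    show "is_path H (take k vs) (take (k - 1) es)" using is_path_take[OF g, of "k - 1"] k0 km by simp
    show "e \<notin> set (take (k - 1) es)" using en by (auto dest: in_set_takeD)
    show "take k vs \<noteq> []" "c \<notin> set (take k vs)" using a_take c_notin k0 by auto
    show "set (take k vs) \<subseteq> verts H" using vsv by (meson set_take_subset subset_trans)
  qed
  then have pre: "set (take k vs) \<subseteq> Ca" using a_take a_in_Ca Ca_Cb_disjoint by blast
  have "set (drop (Suc k) vs) \<subseteq> Ca \<or> set (drop (Suc k) vs) \<subseteq> Cb"
  proof (rule path_one_side)
    show "is_path H (drop (Suc k) vs) (drop (Suc k) es)" using is_path_drop[OF g, of "Suc k"] km by simp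
    show "e \<notin> set (drop (Suc k) es)" using en by (auto dest: in_set_dropD)
    show "drop (Suc k) vs \<noteq> []" "c \<notin> set (drop (Suc k) vs)" using b_drop c_notin by auto
    show "set (drop (Suc k) vs) \<subseteq> verts H" using vsv by (meson set_drop_subset subset_trans)
  qed
  then have suf: "set (drop (Suc k) vs) \<subseteq> Cb" using b_drop b_in_Cb Ca_Cb_disjoint by blast
  have "set (take k es) \<subseteq> Ea"
  proof
    fix f assume f: "f \<in> set (take k es)"
    have "ends H f \<subseteq> set (take (Suc k) vs)"
      using is_path_ends_subset[OF is_path_take[OF g less_imp_le[OF km]] f] .
    also have "\<dots> = insert c (set (take k vs))" using k by (simp add: take_Suc_conv_app_nth)
    finally have "ends H f \<subseteq> Ca \<union> {c}" using pre by blast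
    moreover have "f \<in> edges H" using f g by (auto simp: is_path_def dest: in_set_takeD)
    ultimately show "f \<in> Ea" by (simp add: Ea_def)
  qed
  moreover have "set (drop k es) \<subseteq> Eb"
  proof
    fix f assume f: "f \<in> set (drop k es)"
    have "ends H f \<subseteq> set (drop k vs)"
      using is_path_ends_subset[OF is_path_drop[OF g less_imp_le[OF km]] f] .
    also have "\<dots> = insert c (set (drop (Suc k) vs))" using k by (metis Cons_nth_drop_Suc list.simps(15))
    finally have "ends H f \<subseteq> Cb \<union> {c}" using suf by blast
    moreover have "f \<in> edges H" using f g by (auto simp: is_path_def dest: in_set_dropD)
    ultimately show "f \<in> Eb" by (simp add: Eb_def)
  qed
  ultimately show ?thesis using that k0 km k(2) by blast
qed

end

locale ve_split = ve_separation +
  fixes x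
  assumes xf: "x \<notin> edges H"
begin

text \<open>H1 = H_a + ac and H2 = H_b + ba + ac; x is the label of the virtual edge ac.\<close>
definition "H1 = split_first H c e a x"
definition "H2 = split_second H c e a x"

lemma other_end_a: "other_end H e a = b"
  using eab a_neq_b by (simp add: other_end_def insert_Diff_if)

lemma verts_H1: "verts H1 = Ca \<union> {c}"
  and edges_H1: "edges H1 = insert x Ea"
  and ends_H1: "ends H1 = (ends H)(x := {a, c})"
  using a_in_Ca unfolding H1_def split_first_def add_edge_def H_part_def induced_def Ca_def Ea_def
  by auto

lemma ends_H2: "ends H2 = (ends H)(x := {a, c})"
  unfolding H2_def split_second_def add_edge_def H_part_def induced_def by simp

lemma verts_H2: "verts H2 = insert a (Cb \<union> {c})"
  and edges_H2: "edges H2 = insert x (insert e Eb)"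
  using b_in_Cb eab unfolding H2_def split_second_def add_edge_def H_part_def induced_def Cb_def Eb_def other_end_a
  by auto

lemma x_notin: "x \<notin> Ea" "x \<notin> Eb" "x \<noteq> e"
  using xf Ea_sub Eb_sub ee by auto

lemma finite_edges_H: "finite (edges H)" using wf by (simp add: wf_graph_def)

lemma finite_edges_H1: "finite (edges H1)" using finite_edges_H Ea_sub edges_H1 by (auto intro: finite_subset)
lemma finite_edges_H2: "finite (edges H2)" using finite_edges_H Eb_sub edges_H2 by (auto intro: finite_subset)

lemma a_notin_Cb: "a \<notin> Cb \<union> {c}"
  using a_in_Ca Ca_Cb_disjoint c_neq by auto

lemma a_neq_c: "a \<noteq> c" using c_neq by simp

lemma wf_H1: "wf_graph H1"
proof -
  have fv: "finite (verts H)" and fe: "finite (edges H)" using wf by (auto simp: wf_graph_def)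
  have "finite (verts H1)" using verts_H1 Ca_Cb_subset cv fv by (auto intro: finite_subset)
  moreover have "finite (edges H1)" using finite_edges_H1 .
  moreover have "card (ends H1 f) = 2 \<and> ends H1 f \<subseteq> verts H1" if f: "f \<in> edges H1" for f
  proof (cases "f = x")
    case True then show ?thesis using ends_H1 verts_H1 a_in_Ca a_neq_c by auto
  next
    case False
    then have "f \<in> Ea" using f edges_H1 by auto
    then show ?thesis using ends_H1 verts_H1 False edge_ends_wf Ea_sub unfolding Ea_def by auto
  qed
  ultimately show ?thesis unfolding wf_graph_def by blast
qed

lemma wf_H2: "wf_graph H2"
proof -
  have fv: "finite (verts H)" and fe: "finite (edges H)" using wf by (auto simp: wf_graph_def)
  have "finite (verts H2)" using verts_H2 Ca_Cb_subset cv fv by (auto intro: finite_subset)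
  moreover have "finite (edges H2)" using finite_edges_H2 .
  moreover have "card (ends H2 f) = 2 \<and> ends H2 f \<subseteq> verts H2" if f: "f \<in> edges H2" for f
  proof (cases "f = x")
    case True then show ?thesis using ends_H2 verts_H2 a_neq_c by auto
  next
    case False
    then have "f = e \<or> f \<in> Eb" using f edges_H2 by auto
    then show ?thesis
    proof
      assume "f = e" then show ?thesis using ends_H2 verts_H2 False eab a_neq_b b_in_Cb by auto
    next
      assume "f \<in> Eb" then show ?thesis using ends_H2 verts_H2 False edge_ends_wf Eb_sub unfolding Eb_def by auto
    qed
  qed
  ultimately show ?thesis unfolding wf_graph_def by blast
qed

lemma cycle_H1_avoiding_x:
  assumes "is_cycle H1 C" "x \<notin> C"
  shows "is_cycle H C \<and> C \<subseteq> Ea"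
proof -
  have s: "C \<subseteq> Ea" using is_cycle_sub[OF assms(1)] assms(2) edges_H1 by auto
  have "is_cycle H C" using is_cycle_mono[OF assms(1)] s Ea_sub ends_H1 assms(2) by auto
  then show ?thesis using s by simp
qed

lemma cycle_H2_avoiding_x:
  assumes "is_cycle H2 C" "x \<notin> C" "e \<notin> C"
  shows "is_cycle H C \<and> C \<subseteq> Eb"
proof -
  have s: "C \<subseteq> Eb" using is_cycle_sub[OF assms(1)] assms(2,3) edges_H2 by auto
  have "is_cycle H C" using is_cycle_mono[OF assms(1)] s Eb_sub ends_H2 assms(2) by auto
  then show ?thesis using s by simp
qed

lemma cycle_Ea_H1:
  assumes "is_cycle H C" "C \<subseteq> Ea"
  shows "is_cycle H1 C"
proof (rule is_cycle_mono[OF assms(1)])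
  show "C \<subseteq> edges H1" using assms(2) edges_H1 by auto
  show "\<forall>f\<in>C. ends H1 f = ends H f" using assms(2) ends_H1 x_notin by auto
qed

lemma cycle_Eb_H2:
  assumes "is_cycle H C" "C \<subseteq> Eb"
  shows "is_cycle H2 C"
proof (rule is_cycle_mono[OF assms(1)])
  show "C \<subseteq> edges H2" using assms(2) edges_H2 by auto
  show "\<forall>f\<in>C. ends H2 f = ends H f" using assms(2) ends_H2 x_notin by auto
qed

text \<open>The cycle through e = ab meets c, since c and e separate a from b. Cutting it at c gives a
  path a \<dots> c inside H_a and a path c \<dots> b inside H_b; the virtual edge ac closes both.\<close>
lemma cycle_through_e_split:
  assumes "is_cycle H Z" "e \<in> Z"
  shows "is_cycle H1 (insert x (Z \<inter> Ea))" "is_cycle H2 (insert x (insert e (Z \<inter> Eb)))"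
proof -
  obtain vs0 es0 where cl0: "closing_edge H vs0 es0 e" "Z = insert e (set es0)"
    using is_cycle_closing_edge[OF assms] by blast
  obtain vs es where cl: "closing_edge H vs es e" and Zs: "Z = insert e (set es)"
    and hv: "hd vs = a" and lv: "last vs = b"
    using closing_edge_orient[OF cl0(1) eab] cl0(2) by metis
  have g: "is_path H vs es" and en: "e \<notin> set es" using cl by (auto simp: closing_edge_def)
  obtain k where k0: "0 < k" and km: "k < length es" and k: "vs ! k = c"
    and tkEa: "set (take k es) \<subseteq> Ea" and dkEb: "set (drop k es) \<subseteq> Eb"
    using path_a_b_through_c[OF g hv lv en] .
  have l: "length vs = Suc (length es)" and dv: "distinct vs" using g by (auto simp: is_path_def)
  have "set es = set (take k es) \<union> set (drop k es)"
    by (metis append_take_drop_id set_append)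
  then have ZEa: "Z \<inter> Ea = set (take k es)" and ZEb: "Z \<inter> Eb = set (drop k es)"
    using Zs tkEa dkEb Ea_Eb_disjoint e_notin_Ea_Eb by auto
  have "closing_edge H1 (take (Suc k) vs) (take k es) x"
    unfolding closing_edge_def
  proof (intro conjI)
    show "is_path H1 (take (Suc k) vs) (take k es)"
    proof (rule is_path_mono[OF is_path_take[OF g]])
      show "k \<le> length es" using km by simp
      show "set (take k es) \<subseteq> edges H1" using tkEa edges_H1 by auto
      show "\<forall>f\<in>set (take k es). ends H1 f = ends H f" using tkEa x_notin ends_H1 by auto
    qed
    show "take k es \<noteq> []" "x \<in> edges H1" "x \<notin> set (take k es)"
      using k0 km tkEa x_notin edges_H1 by auto
    have "last (take (Suc k) vs) = c" using k km l by (simp add: last_conv_nth_length)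
    moreover have "hd (take (Suc k) vs) = a" using hv by simp
    ultimately show "ends H1 x = {last (take (Suc k) vs), hd (take (Suc k) vs)}"
      using ends_H1 by auto
  qed
  then have c1: "is_cycle H1 (insert x (Z \<inter> Ea))" using closing_edge_is_cycle ZEa by metis
  have a_drop: "a \<notin> set (drop k vs)"
  proof -
    have "take k vs \<noteq> []" "hd (take k vs) = a" using k0 l hv by (cases vs; simp)+
    then have "a \<in> set (take k vs)" by (metis hd_in_set)
    then show ?thesis using set_take_disj_set_drop_if_distinct[OF dv order.refl] by blast
  qed
  have "is_path H (drop k vs @ tl [b, a]) (drop k es @ [e])"
  proof (rule is_path_append[OF is_path_drop[OF g less_imp_le[OF km]]])
    show "is_path H [b, a] [e]" using eab a_neq_b ee by (auto simp: is_path_def insert_commute)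
    show "last (drop k vs) = hd [b, a]" using lv km l by simp
    show "set (drop k vs) \<inter> set (tl [b, a]) = {}" using a_drop by simp
    show "set (drop k es) \<inter> set [e] = {}" using en by (auto dest: in_set_dropD)
  qed
  then have "closing_edge H2 (drop k vs @ [a]) (drop k es @ [e]) x"
    unfolding closing_edge_def
  proof (intro conjI)
    assume p: "is_path H (drop k vs @ tl [b, a]) (drop k es @ [e])"
    show "is_path H2 (drop k vs @ [a]) (drop k es @ [e])"
    proof (rule is_path_mono)
      show "is_path H (drop k vs @ [a]) (drop k es @ [e])" using p by simp
      show "set (drop k es @ [e]) \<subseteq> edges H2" using dkEb edges_H2 by auto
      show "\<forall>f\<in>set (drop k es @ [e]). ends H2 f = ends H f" using dkEb x_notin ends_H2 by auto
    qed
    show "drop k es @ [e] \<noteq> []" "x \<in> edges H2" "x \<notin> set (drop k es @ [e])"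
      using dkEb x_notin edges_H2 by auto
    have "hd (drop k vs @ [a]) = c" using k km l by (simp add: hd_drop_conv_nth)
    then show "ends H2 x = {last (drop k vs @ [a]), hd (drop k vs @ [a])}"
      using ends_H2 by (auto simp: insert_commute)
  qed
  then have "is_cycle H2 (insert x (set (drop k es @ [e])))" by (rule closing_edge_is_cycle)
  then show "is_cycle H2 (insert x (insert e (Z \<inter> Eb)))" using ZEb by (simp add: insert_commute)
  show "is_cycle H1 (insert x (Z \<inter> Ea))" using c1 .
qed

lemma H2_closing_path:
  assumes "closing_edge H2 vs es x" "hd vs = c" "last vs = a"
  obtains p ps where "is_path H p ps" "es = ps @ [e]" "hd p = c" "last p = b" "set ps \<subseteq> Eb"
    "set (tl p) \<subseteq> Cb" "tl p \<noteq> []"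
proof -
  have g: "is_path H2 vs es" and ne: "es \<noteq> []" and xn: "x \<notin> set es"
    using assms(1) by (auto simp: closing_edge_def)
  have esE: "set es \<subseteq> insert e Eb" using g xn edges_H2 by (auto simp: is_path_def)
  define p where "p = butlast vs"
  define ps where "ps = butlast es"
  have gp: "is_path H2 p ps" and es_eq: "es = ps @ [last es]" and vs_eq: "vs = p @ [a]"
    and el: "ends H2 (last es) = {last p, a}" and hp: "hd p = c"
    using is_path_butlast[OF g ne] assms(2,3) unfolding p_def ps_def by simp_all
  have dv: "distinct vs" and de: "distinct es" using g by (auto simp: is_path_def)
  have pne: "p \<noteq> []" using gp by (auto simp: is_path_def)
  have le: "last es = e"
  proof (rule ccontr)
    assume "last es \<noteq> e"
    moreover have "last es \<in> set es" using ne by simp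
    ultimately have "last es \<in> Eb" using esE by blast
    then have "ends H2 (last es) \<subseteq> Cb \<union> {c}" using ends_H2 x_notin by (auto simp: Eb_def)
    then show False using el a_notin_Cb by auto
  qed
  have "last p \<noteq> a" using dv vs_eq pne by auto
  moreover have "{last p, a} = {a, b}" using el le ends_H2 eab x_notin by simp
  ultimately have lp: "last p = b" by (auto simp: doubleton_eq_iff)
  have psEb: "set ps \<subseteq> Eb" using esE de es_eq le by auto
  have gH: "is_path H p ps"
    by (rule is_path_mono[OF gp]) (use psEb Eb_sub ends_H2 x_notin in auto)
  have tlp: "tl p \<noteq> []" using hp lp c_neq pne by (cases p) auto
  then have "ps \<noteq> []" using gp by (cases p) (auto simp: is_path_def)
  then have "set p \<subseteq> Cb \<union> {c}" using is_path_verts_ends[OF gH] psEb by (auto simp: Eb_def)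
  moreover have "c \<notin> set (tl p)" using gp hp pne by (cases p) (auto simp: is_path_def)
  ultimately have "set (tl p) \<subseteq> Cb" using pne by (cases p) auto
  then show ?thesis using that gH es_eq le hp lp psEb tlp by simp
qed

text \<open>Conversely, the H_a-cycle through the virtual edge is a path a \<dots> c in H_a, and the
  H_b-cycle through it is a path c \<dots> b followed by e; together they form a cycle of H.\<close>
lemma cycles_through_x_combine:
  assumes "is_cycle H1 Z1" "x \<in> Z1" "is_cycle H2 Z2" "x \<in> Z2"
  shows "e \<in> Z2" "is_cycle H ((Z1 - {x}) \<union> (Z2 - {x}))"
proof -
  obtain vs0 es0 where cl0: "closing_edge H1 vs0 es0 x" "Z1 = insert x (set es0)"
    using is_cycle_closing_edge[OF assms(1,2)] by blast
  obtain vs1 es1 where cl1: "closing_edge H1 vs1 es1 x" and Z1s: "Z1 = insert x (set es1)"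
    and h1: "hd vs1 = a" and l1: "last vs1 = c"
    using closing_edge_orient[OF cl0(1)] cl0(2) ends_H1 by (metis fun_upd_same)
  obtain ws0 fs0 where cl0': "closing_edge H2 ws0 fs0 x" "Z2 = insert x (set fs0)"
    using is_cycle_closing_edge[OF assms(3,4)] by blast
  obtain vs2 es2 where cl2: "closing_edge H2 vs2 es2 x" and Z2s: "Z2 = insert x (set es2)"
    and h2: "hd vs2 = c" and l2: "last vs2 = a"
    using closing_edge_orient[OF cl0'(1)] cl0'(2) ends_H2 by (metis fun_upd_same insert_commute)
  obtain p ps where gp: "is_path H p ps" and es2_eq: "es2 = ps @ [e]" and hp: "hd p = c"
    and lp: "last p = b" and psEb: "set ps \<subseteq> Eb" and tlp: "set (tl p) \<subseteq> Cb" "tl p \<noteq> []"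
    using H2_closing_path[OF cl2 h2 l2] .
  show "e \<in> Z2" using Z2s es2_eq by simp
  have g1: "is_path H1 vs1 es1" and ne1: "es1 \<noteq> []" and xn1: "x \<notin> set es1"
    using cl1 by (auto simp: closing_edge_def)
  have es1Ea: "set es1 \<subseteq> Ea" using g1 xn1 edges_H1 by (auto simp: is_path_def)
  have gH1: "is_path H vs1 es1"
    by (rule is_path_mono[OF g1]) (use es1Ea Ea_sub x_notin ends_H1 in auto)
  have sv1: "set vs1 \<subseteq> Ca \<union> {c}"
    using is_path_verts_ends[OF gH1 ne1] es1Ea by (auto simp: Ea_def)
  have "closing_edge H (vs1 @ tl p) (es1 @ ps) e"
    unfolding closing_edge_def
  proof (intro conjI)
    show "is_path H (vs1 @ tl p) (es1 @ ps)"
    proof (rule is_path_append[OF gH1 gp])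
      show "last vs1 = hd p" using l1 hp by simp
      show "set vs1 \<inter> set (tl p) = {}" using sv1 tlp(1) Ca_Cb_disjoint Ca_Cb_subset by blast
      show "set es1 \<inter> set ps = {}" using es1Ea psEb Ea_Eb_disjoint by blast
    qed
    show "es1 @ ps \<noteq> []" "e \<in> edges H" "e \<notin> set (es1 @ ps)"
      using ne1 ee es1Ea psEb e_notin_Ea_Eb by auto
    have "last (vs1 @ tl p) = b" using tlp lp by (simp add: last_tl)
    moreover have "hd (vs1 @ tl p) = a" using h1 g1 by (cases vs1) (auto simp: is_path_def)
    ultimately show "ends H e = {last (vs1 @ tl p), hd (vs1 @ tl p)}"
      using eab by (auto simp: insert_commute)
  qed
  moreover have "(Z1 - {x}) \<union> (Z2 - {x}) = insert e (set (es1 @ ps))"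
    using Z1s Z2s xn1 es2_eq cl2 by (auto simp: closing_edge_def)
  ultimately show "is_cycle H ((Z1 - {x}) \<union> (Z2 - {x}))" using closing_edge_is_cycle by metis
qed

text \<open>The cycle through e splits into one cycle of each piece and every other cycle lies in one
  piece, so the pieces get exactly one cycle more in total.\<close>
lemma decomp_split:
  assumes "D \<in> decomps H"
  obtains D1 D2 where "D1 \<in> decomps H1" "D2 \<in> decomps H2" "card D1 + card D2 = card D + 1"
proof -
  have cyc: "\<And>C. C \<in> D \<Longrightarrow> is_cycle H C" and dsj: "pairwise disjnt D" and un: "\<Union>D = edges H"
    using assms by (auto simp: decomps_iff)
  have finD: "finite D" using finite_decomp[OF finite_edges_H assms] .
  obtain Z where Z: "Z \<in> D" "e \<in> Z" using ee un by auto
  define Da where "Da = {C \<in> D. C \<subseteq> Ea}"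
  define Db where "Db = {C \<in> D. C \<subseteq> Eb}"
  have ZC: "disjnt Z C" if "C \<in> D" "C \<noteq> Z" for C
    using dsj that Z(1) by (auto simp: pairwise_def)
  have Dsplit: "D = insert Z (Da \<union> Db)"
    using Z(1) cycle_avoiding_e_one_side[OF cyc] ZC Z(2) by (auto simp: Da_def Db_def disjnt_def)
  have ZDa: "Z \<notin> Da \<union> Db" using Z(2) e_notin_Ea_Eb by (auto simp: Da_def Db_def)
  have "C \<notin> Db" if "C \<in> Da" for C
    using that is_cycle_ne[OF cyc] Ea_Eb_disjoint unfolding Da_def Db_def by blast
  then have "Da \<inter> Db = {}" by blast
  have DaD: "Da \<subseteq> D" "Db \<subseteq> D" by (auto simp: Da_def Db_def)
  have ZCa: "disjnt Z C" if "C \<in> Da \<union> Db" for C using ZC that ZDa DaD by blast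
  have finDab: "finite Da" "finite Db" using finD DaD by (auto intro: finite_subset)
  have cardD: "card D = card Da + card Db + 1"
    using ZDa finDab \<open>Da \<inter> Db = {}\<close> by (subst Dsplit) (simp add: card_Un_disjoint)
  have "edges H = Z \<union> \<Union>Da \<union> \<Union>Db" using un Dsplit by auto
  moreover have "\<Union>Da \<subseteq> Ea" "\<Union>Db \<subseteq> Eb" by (auto simp: Da_def Db_def)
  ultimately have covEa: "(Z \<inter> Ea) \<union> \<Union>Da = Ea" and covEb: "insert e (Z \<inter> Eb) \<union> \<Union>Db = insert e Eb"
    using Ea_sub Eb_sub Ea_Eb_disjoint Z(2) by blast+
  define Z1 where "Z1 = insert x (Z \<inter> Ea)"
  define Z2 where "Z2 = insert x (insert e (Z \<inter> Eb))"
  have "insert Z1 Da \<in> decomps H1"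
    unfolding decomps_iff
  proof (intro conjI ballI)
    show "is_cycle H1 C" if "C \<in> insert Z1 Da" for C
      using that cycle_through_e_split(1)[OF cyc[OF Z(1)] Z(2)] cycle_Ea_H1 cyc by (auto simp: Z1_def Da_def)
    show "pairwise disjnt (insert Z1 Da)"
    proof (rule pairwise_disjnt_insert[OF pairwise_subset[OF dsj DaD(1)]])
      show "disjnt Z1 C" if "C \<in> Da" for C
        using ZCa[of C] that x_notin unfolding Z1_def Da_def disjnt_def by auto
    qed
    show "\<Union>(insert Z1 Da) = edges H1" using covEa edges_H1 by (simp add: Z1_def)
  qed
  moreover have "insert Z2 Db \<in> decomps H2"
    unfolding decomps_iff
  proof (intro conjI ballI)
    show "is_cycle H2 C" if "C \<in> insert Z2 Db" for C
      using that cycle_through_e_split(2)[OF cyc[OF Z(1)] Z(2)] cycle_Eb_H2 cyc by (auto simp: Z2_def Db_def)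
    show "pairwise disjnt (insert Z2 Db)"
    proof (rule pairwise_disjnt_insert[OF pairwise_subset[OF dsj DaD(2)]])
      show "disjnt Z2 C" if "C \<in> Db" for C
        using ZCa[of C] that x_notin e_notin_Ea_Eb unfolding Z2_def Db_def disjnt_def by auto
    qed
    show "\<Union>(insert Z2 Db) = edges H2" using covEb edges_H2 by (simp add: Z2_def)
  qed
  moreover have "Z1 \<notin> Da" "Z2 \<notin> Db" using x_notin by (auto simp: Z1_def Z2_def Da_def Db_def)
  then have "card (insert Z1 Da) = card Da + 1" "card (insert Z2 Db) = card Db + 1"
    using finDab by simp_all
  ultimately show ?thesis using that cardD by simp
qed

lemma decomps_combine:
  assumes "D1 \<in> decomps H1" "D2 \<in> decomps H2"
  obtains D where "D \<in> decomps H" "card D + 1 = card D1 + card D2"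
proof -
  have cyc1: "\<And>C. C \<in> D1 \<Longrightarrow> is_cycle H1 C" and dsj1: "pairwise disjnt D1"
    and un1: "\<Union>D1 = edges H1" using assms(1) by (auto simp: decomps_iff)
  have cyc2: "\<And>C. C \<in> D2 \<Longrightarrow> is_cycle H2 C" and dsj2: "pairwise disjnt D2"
    and un2: "\<Union>D2 = edges H2" using assms(2) by (auto simp: decomps_iff)
  have fin: "finite D1" "finite D2"
    using finite_decomp[OF finite_edges_H1 assms(1)] finite_decomp[OF finite_edges_H2 assms(2)] .
  obtain Z1 where Z1: "Z1 \<in> D1" "x \<in> Z1" using un1 edges_H1 by auto
  obtain Z2 where Z2: "Z2 \<in> D2" "x \<in> Z2" using un2 edges_H2 by auto
  note comb = cycles_through_x_combine[OF cyc1[OF Z1(1)] Z1(2) cyc2[OF Z2(1)] Z2(2)]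
  define Z where "Z = (Z1 - {x}) \<union> (Z2 - {x})"
  define D1' where "D1' = D1 - {Z1}"
  define D2' where "D2' = D2 - {Z2}"
  have disj1: "disjnt C Z1" if "C \<in> D1'" for C using dsj1 that Z1(1) by (auto simp: D1'_def pairwise_def)
  have disj2: "disjnt C Z2" if "C \<in> D2'" for C using dsj2 that Z2(1) by (auto simp: D2'_def pairwise_def)
  have o1: "is_cycle H C \<and> C \<subseteq> Ea" if "C \<in> D1'" for C
    using cycle_H1_avoiding_x cyc1 disj1[OF that] that Z1(2) by (auto simp: D1'_def disjnt_def)
  have o2: "is_cycle H C \<and> C \<subseteq> Eb" if "C \<in> D2'" for C
    using cycle_H2_avoiding_x cyc2 disj2[OF that] that Z2(2) comb(1) by (auto simp: D2'_def disjnt_def)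
  have Z1s: "Z1 - {x} \<subseteq> Ea" and Z2s: "Z2 - {x} \<subseteq> insert e Eb"
    using is_cycle_sub[OF cyc1[OF Z1(1)]] is_cycle_sub[OF cyc2[OF Z2(1)]] edges_H1 edges_H2 by auto
  have "e \<notin> C" if "C \<in> D1' \<union> D2'" for C using that o1 o2 e_notin_Ea_Eb by blast
  moreover have "e \<in> Z" using comb(1) x_notin by (simp add: Z_def)
  ultimately have ZD: "Z \<notin> D1' \<union> D2'" by blast
  have "C \<notin> D2'" if "C \<in> D1'" for C
  proof
    assume "C \<in> D2'"
    then have "C \<subseteq> Ea \<inter> Eb" using o1[OF that] o2 by blast
    then show False using o1[OF that] is_cycle_ne Ea_Eb_disjoint by blast
  qed
  then have D12: "D1' \<inter> D2' = {}" by blast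
  define D where "D = insert Z (D1' \<union> D2')"
  have "D \<in> decomps H"
    unfolding decomps_iff
  proof (intro conjI ballI)
    show "is_cycle H C" if "C \<in> D" for C using that o1 o2 comb(2) by (auto simp: D_def Z_def)
    have "pairwise disjnt (D1' \<union> D2')"
    proof (rule pairwise_disjnt_Un)
      show "pairwise disjnt D1'" "pairwise disjnt D2'"
        using pairwise_subset[OF dsj1 Diff_subset] pairwise_subset[OF dsj2 Diff_subset]
        by (simp_all add: D1'_def D2'_def)
      show "disjnt C C'" if "C \<in> D1'" "C' \<in> D2'" for C C'
        using o1[OF that(1)] o2[OF that(2)] Ea_Eb_disjoint unfolding disjnt_def by blast
    qed
    moreover have "disjnt Z C" if "C \<in> D1' \<union> D2'" for C
      using that
    proof
      assume C: "C \<in> D1'"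
      then have "C \<inter> (Z2 - {x}) = {}" using o1 Z2s Ea_Eb_disjoint e_notin_Ea_Eb by blast
      then show ?thesis using disj1[OF C] unfolding Z_def disjnt_def by blast
    next
      assume C: "C \<in> D2'"
      then have "C \<inter> (Z1 - {x}) = {}" using o2 Z1s Ea_Eb_disjoint by blast
      then show ?thesis using disj2[OF C] unfolding Z_def disjnt_def by blast
    qed
    ultimately show "pairwise disjnt D" unfolding D_def by (rule pairwise_disjnt_insert)
    have "insert x Ea = Z1 \<union> \<Union>D1'" "x \<notin> \<Union>D1'"
      using un1 Z1 edges_H1 disj1 by (auto simp: D1'_def disjnt_def)
    then have "\<Union>D1' \<union> (Z1 - {x}) = Ea" using x_notin by auto
    moreover have "insert x (insert e Eb) = Z2 \<union> \<Union>D2'" "x \<notin> \<Union>D2'"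
      using un2 Z2 edges_H2 disj2 by (auto simp: D2'_def disjnt_def)
    then have "\<Union>D2' \<union> (Z2 - {x}) = insert e Eb" using x_notin by auto
    ultimately show "\<Union>D = edges H" using edges_split by (auto simp: D_def Z_def)
  qed
  moreover have "card D = card D1' + card D2' + 1"
    using ZD D12 fin by (simp add: D_def D1'_def D2'_def card_Un_disjoint)
  moreover have "card D1' + 1 = card D1" "card D2' + 1 = card D2"
    using fin Z1(1) Z2(1) unfolding D1'_def D2'_def by (metis Suc_eq_plus1 card_Suc_Diff1)+
  ultimately show ?thesis using that by simp
qed

lemma split_cmin_nu:
  assumes "decomps H \<noteq> {}"
  shows "decomps H1 \<noteq> {}" "decomps H2 \<noteq> {}" "cmin H + 1 = cmin H1 + cmin H2" "nu H + 1 = nu H1 + nu H2"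
proof -
  obtain D where D: "D \<in> decomps H" using assms by auto
  then show n1: "decomps H1 \<noteq> {}" and n2: "decomps H2 \<noteq> {}" using decomp_split by blast+
  obtain Dm where Dm: "Dm \<in> decomps H" "card Dm = cmin H" using cmin_attained[OF finite_edges_H assms] by blast
  obtain D1m where D1m: "D1m \<in> decomps H1" "card D1m = cmin H1" using cmin_attained[OF finite_edges_H1 n1] by blast
  obtain D2m where D2m: "D2m \<in> decomps H2" "card D2m = cmin H2" using cmin_attained[OF finite_edges_H2 n2] by blast
  obtain A1 A2 where A: "A1 \<in> decomps H1" "A2 \<in> decomps H2" "card A1 + card A2 = card Dm + 1"
    using decomp_split[OF Dm(1)] by blast
  obtain B where B: "B \<in> decomps H" "card B + 1 = card D1m + card D2m"
    using decomps_combine[OF D1m(1) D2m(1)] by blast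
  have "cmin H1 \<le> card A1" "cmin H2 \<le> card A2" using cmin_le_card finite_edges_H1 finite_edges_H2 A by auto
  moreover have "cmin H \<le> card B" using cmin_le_card[OF finite_edges_H B(1)] .
  ultimately show "cmin H + 1 = cmin H1 + cmin H2" using A B Dm D1m D2m by linarith
  obtain Dx where Dx: "Dx \<in> decomps H" "card Dx = nu H" using nu_attained[OF finite_edges_H assms] by blast
  obtain D1x where D1x: "D1x \<in> decomps H1" "card D1x = nu H1" using nu_attained[OF finite_edges_H1 n1] by blast
  obtain D2x where D2x: "D2x \<in> decomps H2" "card D2x = nu H2" using nu_attained[OF finite_edges_H2 n2] by blast
  obtain A1' A2' where A': "A1' \<in> decomps H1" "A2' \<in> decomps H2" "card A1' + card A2' = card Dx + 1"
    using decomp_split[OF Dx(1)] by blast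
  obtain B' where B': "B' \<in> decomps H" "card B' + 1 = card D1x + card D2x"
    using decomps_combine[OF D1x(1) D2x(1)] by blast
  have "card A1' \<le> nu H1" "card A2' \<le> nu H2" using card_le_nu finite_edges_H1 finite_edges_H2 A' by auto
  moreover have "card B' \<le> nu H" using card_le_nu[OF finite_edges_H B'(1)] .
  ultimately show "nu H + 1 = nu H1 + nu H2" using A' B' Dx D1x D2x by linarith
qed

end

section \<open>Families of pieces glued like a tree\<close>

definition fam_edges :: "('v, 'e) mgraph multiset \<Rightarrow> 'e set" where
  "fam_edges L = \<Union>(edges ` set_mset L)"

definition fam_verts :: "('v, 'e) mgraph multiset \<Rightarrow> 'v set" where
  "fam_verts L = \<Union>(verts ` set_mset L)"

definition edge_mult :: "('v, 'e) mgraph multiset \<Rightarrow> 'e \<Rightarrow> nat" where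
  "edge_mult L y = size (filter_mset (\<lambda>P. y \<in> edges P) L)"

definition fam_incident :: "('v, 'e) mgraph multiset \<Rightarrow> 'e \<Rightarrow> 'v \<Rightarrow> bool" where
  "fam_incident L z v \<longleftrightarrow> (\<exists>P\<in>#L. z \<in> edges P \<and> v \<in> ends P z)"

lemma fam_edges_simps [simp]:
  "fam_edges {#} = {}" "fam_edges (add_mset P L) = edges P \<union> fam_edges L"
  "fam_edges (L1 + L2) = fam_edges L1 \<union> fam_edges L2"
  unfolding fam_edges_def by auto

lemma fam_verts_simps [simp]:
  "fam_verts {#} = {}" "fam_verts (add_mset P L) = verts P \<union> fam_verts L"
  "fam_verts (L1 + L2) = fam_verts L1 \<union> fam_verts L2"
  unfolding fam_verts_def by auto

lemma edge_mult_simps [simp]: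
  "edge_mult {#} y = 0"
  "edge_mult (add_mset P L) y = (if y \<in> edges P then Suc (edge_mult L y) else edge_mult L y)"
  "edge_mult (L1 + L2) y = edge_mult L1 y + edge_mult L2 y"
  unfolding edge_mult_def by auto

lemma edge_mult_eq_0_iff: "edge_mult L y = 0 \<longleftrightarrow> y \<notin> fam_edges L"
  unfolding edge_mult_def fam_edges_def by (auto simp: filter_mset_eq_conv)

lemma edge_mult_pos: "y \<in> fam_edges L \<Longrightarrow> 1 \<le> edge_mult L y"
  using edge_mult_eq_0_iff[of L y] by linarith

lemma edges_subset_fam_edges: "P \<in># L \<Longrightarrow> edges P \<subseteq> fam_edges L"
  unfolding fam_edges_def by auto

lemma verts_subset_fam_verts: "P \<in># L \<Longrightarrow> verts P \<subseteq> fam_verts L"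
  unfolding fam_verts_def by auto

lemma fam_edges_mono: "N \<subseteq># L \<Longrightarrow> fam_edges N \<subseteq> fam_edges L"
  unfolding fam_edges_def by (auto dest: mset_subset_eqD)

text \<open>The pieces produced by 2.5-splits hang together like the nodes of a tree whose tree edges
  are the virtual edges: every edge lies in at most two pieces (consistently), an edge lying in
  two pieces cuts the family into two parts sharing only that edge, and a vertex shared by two
  complementary parts is an endpoint of a shared edge. This is what makes a merge of two
  triangles along a virtual edge a cycle again.\<close>
definition tree_family :: "('v, 'e) mgraph multiset \<Rightarrow> bool" where
  "tree_family L \<longleftrightarrow> (\<forall>P\<in>#L. wf_graph P) \<and> (\<forall>y. edge_mult L y \<le> 2) \<and>
     (\<forall>P\<in>#L. \<forall>Q\<in>#L. \<forall>y. y \<in> edges P \<longrightarrow> y \<in> edges Q \<longrightarrow> ends P y = ends Q y) \<and>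
     (\<forall>y. edge_mult L y = 2 \<longrightarrow> (\<exists>L1 L2. L = L1 + L2 \<and> fam_edges L1 \<inter> fam_edges L2 = {y})) \<and>
     (\<forall>L1 L2. L = L1 + L2 \<longrightarrow>
        (\<forall>v\<in>fam_verts L1 \<inter> fam_verts L2. \<exists>z\<in>fam_edges L1 \<inter> fam_edges L2. fam_incident L z v))"

lemma tree_familyD:
  assumes "tree_family L"
  shows tree_family_wf: "P \<in># L \<Longrightarrow> wf_graph P"
    and tree_family_edge_mult_le: "edge_mult L y \<le> 2"
    and tree_family_ends: "P \<in># L \<Longrightarrow> Q \<in># L \<Longrightarrow> y \<in> edges P \<Longrightarrow> y \<in> edges Q \<Longrightarrow> ends P y = ends Q y"
    and tree_family_cut: "edge_mult L y = 2 \<Longrightarrow> \<exists>L1 L2. L = L1 + L2 \<and> fam_edges L1 \<inter> fam_edges L2 = {y}"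
    and tree_family_shared_vertex: "L = L1 + L2 \<Longrightarrow> v \<in> fam_verts L1 \<Longrightarrow> v \<in> fam_verts L2 \<Longrightarrow>
      \<exists>z\<in>fam_edges L1 \<inter> fam_edges L2. fam_incident L z v"
  using assms unfolding tree_family_def by blast+

lemma tree_family_single:
  assumes "wf_graph G"
  shows "tree_family {#G#}"
proof -
  have c: "edge_mult {#G#} y \<le> 1" for y by simp
  have "fam_verts L1 \<inter> fam_verts L2 = {}" if "{#G#} = L1 + L2" for L1 L2 :: "('a, 'b) mgraph multiset"
    using that unfolding single_is_union by auto
  moreover have "edge_mult {#G#} y \<noteq> 2" for y using c[of y] by linarith
  ultimately show ?thesis unfolding tree_family_def using assms c by auto
qed

lemma add_mset_union_cases:
  assumes "add_mset a M = L1 + L2"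
  shows "(\<exists>L1'. L1 = add_mset a L1' \<and> M = L1' + L2) \<or> (\<exists>L2'. L2 = add_mset a L2' \<and> M = L1 + L2')"
proof -
  have "a \<in># L1 + L2" using assms by (metis union_single_eq_member)
  then show ?thesis
  proof (cases "a \<in># L1")
    case True
    then have "L1 = add_mset a (L1 - {#a#})" by simp
    then have "add_mset a M = add_mset a ((L1 - {#a#}) + L2)" using assms by (metis union_mset_add_mset_left)
    then have "M = (L1 - {#a#}) + L2" by simp
    then show ?thesis using \<open>L1 = _\<close> by blast
  next
    case False
    then have a2: "a \<in># L2" using \<open>a \<in># L1 + L2\<close> by simp
    then have "L2 = add_mset a (L2 - {#a#})" by simp
    then have "add_mset a M = add_mset a (L1 + (L2 - {#a#}))" using assms by (metis union_mset_add_mset_right)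
    then have "M = L1 + (L2 - {#a#})" by simp
    then show ?thesis using \<open>L2 = _\<close> by blast
  qed
qed

lemma add_mset2_union_cases:
  assumes "add_mset a (add_mset b M) = L1 + L2"
  obtains N1 N2 where "M = N1 + N2" "L1 = add_mset a (add_mset b N1)" "L2 = N2"
    | N1 N2 where "M = N1 + N2" "L1 = N1" "L2 = add_mset a (add_mset b N2)"
    | N1 N2 where "M = N1 + N2" "L1 = add_mset a N1" "L2 = add_mset b N2"
    | N1 N2 where "M = N1 + N2" "L1 = add_mset b N1" "L2 = add_mset a N2"
proof -
  from add_mset_union_cases[OF assms] show ?thesis
  proof (elim disjE exE conjE)
    fix L1' assume l1: "L1 = add_mset a L1'" and m: "add_mset b M = L1' + L2"
    from add_mset_union_cases[OF m] show ?thesis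
    proof (elim disjE exE conjE)
      fix L1'' assume "L1' = add_mset b L1''" "M = L1'' + L2"
      then show ?thesis using that(1) l1 by blast
    next
      fix L2' assume "L2 = add_mset b L2'" "M = L1' + L2'"
      then show ?thesis using that(3) l1 by blast
    qed
  next
    fix L2' assume l2: "L2 = add_mset a L2'" and m: "add_mset b M = L1 + L2'"
    from add_mset_union_cases[OF m] show ?thesis
    proof (elim disjE exE conjE)
      fix L1'' assume "L1 = add_mset b L1''" "M = L1'' + L2'"
      then show ?thesis using that(4) l2 by blast
    next
      fix L2'' assume "L2' = add_mset b L2''" "M = L1 + L2''"
      then show ?thesis using that(2) l2 by blast
    qed
  qed
qed

lemma tree_family_separate:
  assumes tree: "tree_family (add_mset P (add_mset Q N))" and z: "z \<in> edges P" "z \<in> edges Q"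
  obtains L1 L2 where "add_mset P (add_mset Q N) = L1 + L2" "fam_edges L1 \<inter> fam_edges L2 = {z}"
    "P \<in># L1" "Q \<in># L2"
proof -
  let ?L = "add_mset P (add_mset Q N)"
  have two: "edge_mult ?L z = 2" using tree_family_edge_mult_le[OF tree, of z] z by simp
  then obtain K1 K2 where K: "?L = K1 + K2" "fam_edges K1 \<inter> fam_edges K2 = {z}"
    using tree_family_cut[OF tree] by blast
  have "edge_mult K1 z + edge_mult K2 z = 2" using two K(1) by (metis edge_mult_simps(3))
  moreover have "1 \<le> edge_mult K1 z" "1 \<le> edge_mult K2 z"
    using K(2) edge_mult_pos[of z K1] edge_mult_pos[of z K2] by auto
  ultimately have one: "edge_mult K1 z = 1" "edge_mult K2 z = 1" by linarith+
  from add_mset2_union_cases[OF K(1)] show ?thesis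
  proof cases
    case (1 N1 N2) then show ?thesis using one z by simp
  next
    case (2 N1 N2) then show ?thesis using one z by simp
  next
    case (3 N1 N2) then show ?thesis by (intro that[OF K(1,2)]) simp_all
  next
    case (4 N1 N2)
    show ?thesis
    proof (rule that[of K2 K1])
      show "?L = K2 + K1" using K(1) by (simp add: add.commute)
      show "fam_edges K2 \<inter> fam_edges K1 = {z}" using K(2) by (simp add: Int_commute)
      show "P \<in># K2" "Q \<in># K1" using 4 by simp_all
    qed
  qed
qed

locale family_split =
  fixes H :: "('v, 'e) mgraph" and M H1 H2 and x :: 'e
  assumes tree_L: "tree_family (add_mset H M)"
    and x_new: "x \<notin> fam_edges (add_mset H M)"
    and wf1: "wf_graph H1" and wf2: "wf_graph H2"
    and edges_Int: "edges H1 \<inter> edges H2 = {x}" and edges_Un: "edges H1 \<union> edges H2 = insert x (edges H)"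
    and ends_H1_old: "\<And>y. y \<in> edges H1 \<Longrightarrow> y \<noteq> x \<Longrightarrow> ends H1 y = ends H y"
    and ends_H2_old: "\<And>y. y \<in> edges H2 \<Longrightarrow> y \<noteq> x \<Longrightarrow> ends H2 y = ends H y"
    and ends_x: "ends H1 x = ends H2 x"
    and verts_Int: "verts H1 \<inter> verts H2 \<subseteq> ends H1 x" and verts_Un: "verts H1 \<union> verts H2 = verts H"
begin

abbreviation "L \<equiv> add_mset H M"
abbreviation "L' \<equiv> add_mset H1 (add_mset H2 M)"

lemmas tree_LD = tree_family_wf[OF tree_L] tree_family_edge_mult_le[OF tree_L]
  tree_family_ends[OF tree_L] tree_family_cut[OF tree_L] tree_family_shared_vertex[OF tree_L]

lemma x_fresh: "x \<notin> fam_edges M" "x \<notin> edges H" using x_new by auto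

lemma x_in_H1_H2: "x \<in> edges H1" "x \<in> edges H2" using edges_Int by auto

lemma edge_mult_split: "edge_mult L' y = (if y = x then 2 else edge_mult L y)"
proof (cases "y = x")
  case True
  have "edge_mult M x = 0" using x_fresh edge_mult_eq_0_iff by metis
  then show ?thesis using True x_in_H1_H2 x_fresh by simp
next
  case False
  then have "(y \<in> edges H1 \<or> y \<in> edges H2) \<longleftrightarrow> y \<in> edges H" using edges_Un by blast
  moreover have "\<not> (y \<in> edges H1 \<and> y \<in> edges H2)" using edges_Int False by blast
  ultimately show ?thesis using False by auto
qed

lemma fam_incident_split:
  assumes "fam_incident L z v" "z \<noteq> x"
  shows "fam_incident L' z v"
proof -
  obtain P where P: "P \<in># L" "z \<in> edges P" "v \<in> ends P z" using assms(1) unfolding fam_incident_def by blast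
  show ?thesis
  proof (cases "P = H")
    case False
    then show ?thesis using P unfolding fam_incident_def by auto
  next
    case True
    then have "z \<in> edges H1 \<or> z \<in> edges H2" using P edges_Un by blast
    then show ?thesis
    proof
      assume "z \<in> edges H1" then show ?thesis using ends_H1_old assms(2) P True unfolding fam_incident_def by force
    next
      assume "z \<in> edges H2" then show ?thesis using ends_H2_old assms(2) P True unfolding fam_incident_def by force
    qed
  qed
qed

lemma incident_verts_H2:
  assumes "fam_incident L z v" "z \<in> edges H2" "z \<noteq> x"
  shows "v \<in> verts H2"
proof -
  obtain P where P: "P \<in># L" "z \<in> edges P" "v \<in> ends P z" using assms(1) unfolding fam_incident_def by blast
  have zH: "z \<in> edges H" using assms(2,3) edges_Un by blast
  have "ends P z = ends H z" using tree_LD(3)[OF P(1) _ P(2) zH] by simp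
  also have "\<dots> = ends H2 z" using ends_H2_old assms(2,3) by simp
  finally show ?thesis using P(3) wf2 assms(2) unfolding wf_graph_def by blast
qed

lemma incident_verts_H1:
  assumes "fam_incident L z v" "z \<in> edges H1" "z \<noteq> x"
  shows "v \<in> verts H1"
proof -
  obtain P where P: "P \<in># L" "z \<in> edges P" "v \<in> ends P z" using assms(1) unfolding fam_incident_def by blast
  have zH: "z \<in> edges H" using assms(2,3) edges_Un by blast
  have "ends P z = ends H z" using tree_LD(3)[OF P(1) _ P(2) zH] by simp
  also have "\<dots> = ends H1 z" using ends_H1_old assms(2,3) by simp
  finally show ?thesis using P(3) wf1 assms(2) unfolding wf_graph_def by blast
qed

text \<open>A vertex on both halves is an end of the virtual edge. Otherwise apply the tree property of
  L, where H stands for both halves; if the shared edge found there lies in the wrong half, the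
  vertex lies in that half too, which reduces to another case.\<close>
lemma shared_vertex_incident_halves:
  assumes M: "M = N1 + N2" and v: "v \<in> fam_verts (add_mset H1 N1)" "v \<in> fam_verts (add_mset H2 N2)"
  shows "\<exists>z\<in>fam_edges (add_mset H1 N1) \<inter> fam_edges (add_mset H2 N2). fam_incident L' z v"
proof -
  have xN: "x \<notin> fam_edges N1" "x \<notin> fam_edges N2" using x_fresh M by auto
  have in_H1_H2: "\<exists>z\<in>fam_edges (add_mset H1 N1) \<inter> fam_edges (add_mset H2 N2). fam_incident L' z v"
    if t: "v \<in> verts H1" "v \<in> verts H2" for v
  proof -
    have "v \<in> ends H1 x" using t verts_Int by blast
    then have "fam_incident L' x v" using x_in_H1_H2 unfolding fam_incident_def by auto
    then show ?thesis using x_in_H1_H2 by auto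
  qed
  have LA: "L = add_mset H N1 + N2" "L = N1 + add_mset H N2" using M by simp_all
  have in_H1_N2: "\<exists>z\<in>fam_edges (add_mset H1 N1) \<inter> fam_edges (add_mset H2 N2). fam_incident L' z v"
    if t: "v \<in> verts H1" "v \<in> fam_verts N2" for v
  proof -
    have "v \<in> fam_verts (add_mset H N1)" using t verts_Un by auto
    then obtain z where z: "z \<in> fam_edges (add_mset H N1)" "z \<in> fam_edges N2" "fam_incident L z v"
      using tree_LD(5)[OF LA(1) _ t(2)] by blast
    have zx: "z \<noteq> x" using z xN by auto
    have w': "fam_incident L' z v" using fam_incident_split[OF z(3) zx] .
    consider "z \<in> fam_edges N1" | "z \<in> edges H1" | "z \<in> edges H2" "z \<notin> edges H1"
      using z(1) edges_Un by auto
    then show ?thesis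
    proof cases
      case 1 then show ?thesis using z w' by auto
    next
      case 2 then show ?thesis using z w' by auto
    next
      case 3
      then have "v \<in> verts H2" using incident_verts_H2[OF z(3) _ zx] by simp
      then show ?thesis using in_H1_H2 t by blast
    qed
  qed
  have in_N1_H2: "\<exists>z\<in>fam_edges (add_mset H1 N1) \<inter> fam_edges (add_mset H2 N2). fam_incident L' z v"
    if t: "v \<in> fam_verts N1" "v \<in> verts H2" for v
  proof -
    have "v \<in> fam_verts (add_mset H N2)" using t verts_Un by auto
    then obtain z where z: "z \<in> fam_edges N1" "z \<in> fam_edges (add_mset H N2)" "fam_incident L z v"
      using tree_LD(5)[OF LA(2) t(1)] by blast
    have zx: "z \<noteq> x" using z xN by auto
    have w': "fam_incident L' z v" using fam_incident_split[OF z(3) zx] .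
    consider "z \<in> fam_edges N2" | "z \<in> edges H2" | "z \<in> edges H1" "z \<notin> edges H2"
      using z(2) edges_Un by auto
    then show ?thesis
    proof cases
      case 1 then show ?thesis using z w' by auto
    next
      case 2 then show ?thesis using z w' by auto
    next
      case 3
      then have "v \<in> verts H1" using incident_verts_H1[OF z(3) _ zx] by simp
      then show ?thesis using in_H1_H2 t by blast
    qed
  qed
  have in_N1_N2: "\<exists>z\<in>fam_edges (add_mset H1 N1) \<inter> fam_edges (add_mset H2 N2). fam_incident L' z v"
    if t: "v \<in> fam_verts N1" "v \<in> fam_verts N2" for v
  proof -
    have "v \<in> fam_verts (add_mset H N1)" using t by auto
    then obtain z where z: "z \<in> fam_edges (add_mset H N1)" "z \<in> fam_edges N2" "fam_incident L z v"
      using tree_LD(5)[OF LA(1) _ t(2)] by blast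
    have zx: "z \<noteq> x" using z xN by auto
    have w': "fam_incident L' z v" using fam_incident_split[OF z(3) zx] .
    consider "z \<in> fam_edges N1" | "z \<in> edges H1" | "z \<in> edges H2" "z \<notin> edges H1"
      using z(1) edges_Un by auto
    then show ?thesis
    proof cases
      case 1 then show ?thesis using z w' by auto
    next
      case 2 then show ?thesis using z w' by auto
    next
      case 3
      then have "v \<in> verts H2" using incident_verts_H2[OF z(3) _ zx] by simp
      then show ?thesis using in_N1_H2 t by blast
    qed
  qed
  have "v \<in> verts H1 \<or> v \<in> fam_verts N1" "v \<in> verts H2 \<or> v \<in> fam_verts N2" using v by auto
  then show ?thesis using in_H1_H2 in_H1_N2 in_N1_H2 in_N1_N2 by blast
qed

end

context family_split
begin

lemma family_split_swap: "family_split H M H2 H1 x"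
  unfolding family_split_def
  using tree_L x_new wf1 wf2 edges_Int edges_Un ends_H1_old ends_H2_old ends_x verts_Int verts_Un
  by (auto simp: Int_commute Un_commute)

lemma shared_vertex_incident:
  assumes "L' = L1 + L2" "v \<in> fam_verts L1" "v \<in> fam_verts L2"
  shows "\<exists>z\<in>fam_edges L1 \<inter> fam_edges L2. fam_incident L' z v"
proof -
  from add_mset2_union_cases[OF assms(1)] show ?thesis
  proof cases
    case (1 N1 N2)
    have LL: "L = add_mset H N1 + N2" using 1 by simp
    have "v \<in> fam_verts (add_mset H N1)" using assms(2) 1 verts_Un by auto
    then obtain z where z: "z \<in> fam_edges (add_mset H N1)" "z \<in> fam_edges N2" "fam_incident L z v"
      using tree_LD(5)[OF LL _ ] assms(3) 1 by blast
    have zx: "z \<noteq> x" using z x_fresh 1 by auto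
    have "z \<in> fam_edges L1" using z(1) 1 edges_Un by auto
    then show ?thesis using z 1 fam_incident_split[OF z(3) zx] by auto
  next
    case (2 N1 N2)
    have LL: "L = N1 + add_mset H N2" using 2 by simp
    have "v \<in> fam_verts (add_mset H N2)" using assms(3) 2 verts_Un by auto
    then obtain z where z: "z \<in> fam_edges N1" "z \<in> fam_edges (add_mset H N2)" "fam_incident L z v"
      using tree_LD(5)[OF LL] assms(2) 2 by blast
    have zx: "z \<noteq> x" using z x_fresh 2 by auto
    have "z \<in> fam_edges L2" using z(2) 2 edges_Un by auto
    then show ?thesis using z 2 fam_incident_split[OF z(3) zx] by auto
  next
    case (3 N1 N2)
    then show ?thesis using shared_vertex_incident_halves[of N1 N2 v] assms by simp
  next
    case (4 N1 N2)
    have "\<exists>z\<in>fam_edges (add_mset H2 N1) \<inter> fam_edges (add_mset H1 N2). fam_incident (add_mset H2 (add_mset H1 M)) z v"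
      using family_split.shared_vertex_incident_halves[OF family_split_swap, of N1 N2 v] 4 assms by simp
    then show ?thesis using 4 by (simp add: add_mset_commute)
  qed
qed

lemma cut_old_edge:
  assumes "y \<noteq> x" "edge_mult L' y = 2"
  shows "\<exists>L1 L2. L' = L1 + L2 \<and> fam_edges L1 \<inter> fam_edges L2 = {y}"
proof -
  have "edge_mult L y = 2" using assms edge_mult_split by simp
  then obtain L1 L2 where LL: "L = L1 + L2" "fam_edges L1 \<inter> fam_edges L2 = {y}" using tree_LD(4) by blast
  from add_mset_union_cases[OF LL(1)] show ?thesis
  proof (elim disjE exE conjE)
    fix L1' assume a: "L1 = add_mset H L1'" "M = L1' + L2"
    have "x \<notin> fam_edges L2" using x_fresh a by auto
    then have "fam_edges (add_mset H1 (add_mset H2 L1')) \<inter> fam_edges L2 = {y}" using LL(2) a edges_Un by auto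
    moreover have "L' = add_mset H1 (add_mset H2 L1') + L2" using a by simp
    ultimately show ?thesis by blast
  next
    fix L2' assume a: "L2 = add_mset H L2'" "M = L1 + L2'"
    have "x \<notin> fam_edges L1" using x_fresh a by auto
    then have "fam_edges L1 \<inter> fam_edges (add_mset H1 (add_mset H2 L2')) = {y}" using LL(2) a edges_Un by auto
    moreover have "L' = L1 + add_mset H1 (add_mset H2 L2')" using a by simp
    ultimately show ?thesis by blast
  qed
qed

text \<open>The subfamilies of M that are closed off from the old edges of H_a: the rest of M shares
  no edge with them or with H_a. A smallest one is the branch of the tree hanging off H_a.\<close>
definition H1_closed :: "('v, 'e) mgraph multiset \<Rightarrow> bool" where
  "H1_closed N \<longleftrightarrow> N \<subseteq># M \<and> fam_edges (M - N) \<inter> ((edges H1 - {x}) \<union> fam_edges N) = {}"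

lemma minimal_H1_closed_connected:
  assumes M1: "H1_closed M1" and min: "\<And>N. H1_closed N \<Longrightarrow> size M1 \<le> size N"
    and AB: "M1 = A + B" "A \<noteq> {#}"
  shows "fam_edges A \<inter> ((edges H1 - {x}) \<union> fam_edges B) \<noteq> {}"
proof
  assume A: "fam_edges A \<inter> ((edges H1 - {x}) \<union> fam_edges B) = {}"
  have M1M: "M1 \<subseteq># M" and M1d: "fam_edges (M - M1) \<inter> ((edges H1 - {x}) \<union> fam_edges M1) = {}"
    using M1 unfolding H1_closed_def by auto
  have BM: "B \<subseteq># M" using AB M1M by (metis mset_subset_eq_add_right subset_mset.order_trans)
  have "M - B = A + (M - M1)" using AB M1M
    by (metis add.commute subset_mset.add_diff_assoc2 diff_union_cancelR mset_subset_eq_add_right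
        subset_mset.diff_add)
  then have "H1_closed B" using A M1d AB BM unfolding H1_closed_def by auto
  then have "size M1 \<le> size B" using min by blast
  moreover have "size M1 = size A + size B" "size A > 0" using AB by (simp_all add: nonempty_has_size)
  ultimately show False by simp
qed

text \<open>An edge z of H_b in the branch M1 would be an old edge of H held by H and by some Q in M1.
  Cutting at z puts Q and H on opposite sides; the part of M1 on Q's side must reach H_a or the
  rest of M1 by connectivity, and the only edge crossing the cut is z, so z is held twice in M1.\<close>
lemma minimal_H1_closed_avoids_H2:
  assumes M1: "H1_closed M1" and min: "\<And>N. H1_closed N \<Longrightarrow> size M1 \<le> size N"
  shows "fam_edges M1 \<inter> edges H2 = {}"
proof (rule ccontr)
  assume "fam_edges M1 \<inter> edges H2 \<noteq> {}"
  then obtain z where z: "z \<in> fam_edges M1" "z \<in> edges H2" by auto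
  have M1M: "M1 \<subseteq># M" using M1 unfolding H1_closed_def by simp
  have zx: "z \<noteq> x" using z M1M x_fresh fam_edges_mono by blast
  have zH: "z \<in> edges H" and zS: "z \<notin> edges H1 - {x}" using z zx edges_Un edges_Int by blast+
  obtain Q where Q: "Q \<in># M1" "z \<in> edges Q" using z(1) unfolding fam_edges_def by auto
  have QM: "Q \<in># M" using Q(1) M1M by (auto dest: mset_subset_eqD)
  have "M = M1 + (M - M1)" using M1M by simp
  then have "edge_mult M z = edge_mult M1 z + edge_mult (M - M1) z" by (metis edge_mult_simps(3))
  moreover have "edge_mult L z = Suc (edge_mult M z)" using zH by simp
  ultimately have cM1: "edge_mult M1 z = 1" using tree_LD(2)[of z] edge_mult_pos[OF z(1)] by linarith
  have LQ: "L = add_mset H (add_mset Q (M - {#Q#}))" using QM by simp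
  obtain L1 L2 where LL: "L = L1 + L2" "fam_edges L1 \<inter> fam_edges L2 = {z}" "H \<in># L1" "Q \<in># L2"
    using tree_family_separate[OF tree_L[unfolded LQ] zH Q(2)] LQ by metis
  define A where "A = M1 \<inter># L2"
  define B where "B = M1 - A"
  have "A \<subseteq># M1" unfolding A_def by simp
  then have AB: "M1 = A + B" unfolding B_def by (metis subset_mset.add_diff_inverse)
  have QA: "Q \<in># A" using Q(1) LL(4) unfolding A_def by simp
  have BL1: "B \<subseteq># L1"
  proof (rule mset_subset_eqI)
    fix R
    have "count M1 R \<le> count M R" using M1M by (simp add: mset_subset_eq_count)
    moreover have "count L R = count L1 R + count L2 R" using LL(1) by simp
    ultimately show "count B R \<le> count L1 R" unfolding B_def A_def by (auto split: if_splits)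
  qed
  have "A \<noteq> {#}" using QA by auto
  then have "fam_edges A \<inter> ((edges H1 - {x}) \<union> fam_edges B) \<noteq> {}"
    using minimal_H1_closed_connected[of M1 A B] M1 min AB by blast
  then obtain w where w: "w \<in> fam_edges A" "w \<in> (edges H1 - {x}) \<union> fam_edges B" by blast
  moreover have "fam_edges A \<subseteq> fam_edges L2" using fam_edges_mono[of A L2] by (simp add: A_def)
  moreover have "(edges H1 - {x}) \<union> fam_edges B \<subseteq> fam_edges L1"
    using edges_subset_fam_edges[OF LL(3)] fam_edges_mono[OF BL1] edges_Un by auto
  ultimately have "w \<in> fam_edges L1 \<inter> fam_edges L2" by blast
  then have "w = z" using LL(2) by simp
  then have "z \<in> fam_edges B" using w(2) zS by blast
  moreover have "z \<in> fam_edges A" using edges_subset_fam_edges[OF QA] Q(2) by blast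
  ultimately have "2 \<le> edge_mult M1 z" using AB edge_mult_pos[of z A] edge_mult_pos[of z B] by simp
  then show False using cM1 by simp
qed

lemma cut_virtual_edge: "\<exists>L1 L2. L' = L1 + L2 \<and> fam_edges L1 \<inter> fam_edges L2 = {x}"
proof -
  have "H1_closed M" unfolding H1_closed_def by simp
  then obtain M1 where M1: "H1_closed M1" and min: "\<And>N. H1_closed N \<Longrightarrow> size M1 \<le> size N"
    using ex_has_least_nat[of H1_closed M size] by blast
  define M2 where "M2 = M - M1"
  have MM: "M = M1 + M2" using M1 unfolding M2_def H1_closed_def by simp
  have M2d: "fam_edges M2 \<inter> ((edges H1 - {x}) \<union> fam_edges M1) = {}"
    using M1 unfolding M2_def H1_closed_def by simp
  have "x \<notin> fam_edges M2" using x_fresh MM by simp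
  then have "fam_edges (add_mset H1 M1) \<inter> fam_edges (add_mset H2 M2) = {x}"
    using M2d edges_Int minimal_H1_closed_avoids_H2[OF M1 min] x_in_H1_H2 by auto
  moreover have "L' = add_mset H1 M1 + add_mset H2 M2" using MM by simp
  ultimately show ?thesis by blast
qed

lemma tree_family_split: "tree_family L'"
  unfolding tree_family_def
proof (intro conjI allI impI ballI)
  fix P assume "P \<in># L'" then show "wf_graph P" using wf1 wf2 tree_LD(1) by auto
next
  fix y show "edge_mult L' y \<le> 2" using edge_mult_split tree_LD(2) by simp
next
  fix P Q y assume P: "P \<in># L'" and Q: "Q \<in># L'" and yP: "y \<in> edges P" and yQ: "y \<in> edges Q"
  have tr: "\<exists>P'\<in>#L. y \<in> edges P' \<and> ends P' y = ends P y" if "P \<in># L'" "y \<in> edges P" "y \<noteq> x" for P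
    using that ends_H1_old ends_H2_old edges_Un by auto
  show "ends P y = ends Q y"
  proof (cases "y = x")
    case True
    then have "P \<in> {H1, H2}" "Q \<in> {H1, H2}" using P Q yP yQ x_fresh unfolding fam_edges_def by auto
    then show ?thesis using ends_x True by auto
  next
    case False
    obtain P' where P': "P' \<in># L" "y \<in> edges P'" "ends P' y = ends P y" using tr[OF P yP False] by blast
    obtain Q' where Q': "Q' \<in># L" "y \<in> edges Q'" "ends Q' y = ends Q y" using tr[OF Q yQ False] by blast
    show ?thesis using tree_LD(3)[OF P'(1) Q'(1) P'(2) Q'(2)] P' Q' by simp
  qed
next
  fix y assume "edge_mult L' y = 2"
  then show "\<exists>L1 L2. L' = L1 + L2 \<and> fam_edges L1 \<inter> fam_edges L2 = {y}"
    using cut_old_edge cut_virtual_edge by (cases "y = x") auto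
next
  fix L1 L2 v assume "L' = L1 + L2" "v \<in> fam_verts L1 \<inter> fam_verts L2"
  then show "\<exists>z\<in>fam_edges L1 \<inter> fam_edges L2. fam_incident L' z v" using shared_vertex_incident by blast
qed

end

context ve_split
begin

lemma family_split_ve:
  assumes "tree_family (add_mset H M)" "x \<notin> fam_edges (add_mset H M)"
  shows "family_split H M H1 H2 x"
  unfolding family_split_def
proof (intro conjI allI impI)
  show "tree_family (add_mset H M)" "x \<notin> fam_edges (add_mset H M)" using assms by auto
  show "wf_graph H1" using wf_H1 .
  show "wf_graph H2" using wf_H2 .
  show "edges H1 \<inter> edges H2 = {x}" using edges_H1 edges_H2 Ea_Eb_disjoint e_notin_Ea_Eb by auto
  show "edges H1 \<union> edges H2 = insert x (edges H)" using edges_H1 edges_H2 edges_split by auto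
  show "\<And>y. y \<in> edges H1 \<Longrightarrow> y \<noteq> x \<Longrightarrow> ends H1 y = ends H y" using ends_H1 by simp
  show "\<And>y. y \<in> edges H2 \<Longrightarrow> y \<noteq> x \<Longrightarrow> ends H2 y = ends H y" using ends_H2 by simp
  show "ends H1 x = ends H2 x" using ends_H1 ends_H2 by simp
  show "verts H1 \<inter> verts H2 \<subseteq> ends H1 x" using verts_H1 verts_H2 ends_H1 Ca_Cb_disjoint by auto
  show "verts H1 \<union> verts H2 = verts H" using verts_H1 verts_H2 verts_split a_in_Ca by auto
qed

end

locale family_merge =
  fixes A B :: "('v, 'e) mgraph" and M and x :: 'e
  assumes tree: "tree_family (add_mset A (add_mset B M))" and xA: "x \<in> edges A" and xB: "x \<in> edges B"
begin

abbreviation "L \<equiv> add_mset A (add_mset B M)"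
abbreviation "C \<equiv> glue A B x"
abbreviation "L' \<equiv> add_mset C M"

lemmas tree_LD = tree_familyD[OF tree]

lemma x_fresh: "x \<notin> fam_edges M"
  using tree_LD(2)[of x] xA xB edge_mult_eq_0_iff[of M x] by simp

lemma vC: "verts C = verts A \<union> verts B" and eC: "edges C = (edges A \<union> edges B) - {x}"
  and nC: "ends C f = (if f \<in> edges A then ends A f else ends B f)"
  unfolding glue_def by auto

lemma glue_conditions:
  shows "edges A \<inter> edges B = {x}" "ends A x = ends B x" "verts A \<inter> verts B \<subseteq> ends A x"
proof -
  obtain L1 L2 where LL: "L = L1 + L2" "fam_edges L1 \<inter> fam_edges L2 = {x}"
    "A \<in># L1" "B \<in># L2"
    using tree_family_separate[OF tree xA xB] by blast
  show "edges A \<inter> edges B = {x}"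
    using LL(2) edges_subset_fam_edges[OF LL(3)] edges_subset_fam_edges[OF LL(4)] xA xB by blast
  show "ends A x = ends B x" using tree_family_ends[OF tree _ _ xA xB] by simp
  show "verts A \<inter> verts B \<subseteq> ends A x"
  proof
    fix v assume "v \<in> verts A \<inter> verts B"
    then obtain z where z: "z \<in> fam_edges L1 \<inter> fam_edges L2" "fam_incident L z v"
      using tree_family_shared_vertex[OF tree LL(1)] verts_subset_fam_verts[OF LL(3)]
        verts_subset_fam_verts[OF LL(4)] by blast
    then have "z = x" using LL(2) by simp
    then obtain P where P: "P \<in># L" "x \<in> edges P" "v \<in> ends P x"
      using z(2) unfolding fam_incident_def by blast
    then show "v \<in> ends A x" using tree_family_ends[OF tree P(1) _ P(2) xA] by simp
  qed
qed

lemma edge_mult_merge_le: "edge_mult L' y \<le> edge_mult L y"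
  using eC by auto

lemma fam_incident_merge:
  assumes w: "fam_incident L z v" and zx: "z \<noteq> x"
  shows "fam_incident L' z v"
proof -
  obtain P where P: "P \<in># L" "z \<in> edges P" "v \<in> ends P z" using w unfolding fam_incident_def by blast
  show ?thesis
  proof (cases "P = A \<or> P = B")
    case True
    then have zC: "z \<in> edges C" using P zx eC by auto
    have "ends C z = ends P z"
    proof (cases "z \<in> edges A")
      case True then show ?thesis using nC tree_LD(3)[OF _ P(1) True P(2)] by simp
    next
      case False
      then have "z \<in> edges B" using zC eC by auto
      then show ?thesis using nC False tree_LD(3)[OF _ P(1) _ P(2), of B] by simp
    qed
    then show ?thesis using zC P(3) unfolding fam_incident_def by auto
  next
    case False
    then have "P \<in># M" using P(1) by auto
    then show ?thesis using P unfolding fam_incident_def by auto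
  qed
qed

lemma ends_merge:
  assumes "P \<in># L'" "y \<in> edges P"
  shows "\<exists>P'\<in>#L. y \<in> edges P' \<and> ends P' y = ends P y"
proof (cases "P = C")
  case True
  then show ?thesis using assms nC eC by (cases "y \<in> edges A") auto
next
  case False
  then show ?thesis using assms by auto
qed

lemma cut_merge:
  assumes c2: "edge_mult L' y = 2"
  shows "\<exists>L1 L2. L' = L1 + L2 \<and> fam_edges L1 \<inter> fam_edges L2 = {y}"
proof -
  have "x \<notin> edges C" using eC by simp
  then have "edge_mult L' x = 0" using x_fresh edge_mult_eq_0_iff[of M x] by simp
  then have yx: "y \<noteq> x" using c2 by auto
  have "edge_mult L y = 2" using edge_mult_merge_le[of y] tree_LD(2)[of y] c2 by linarith
  then obtain L1 L2 where K: "L = L1 + L2" "fam_edges L1 \<inter> fam_edges L2 = {y}" using tree_LD(4) by blast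
  from add_mset2_union_cases[OF K(1)] show ?thesis
  proof cases
    case (1 N1 N2)
    have "fam_edges (add_mset C N1) \<inter> fam_edges N2 = {y}" using K(2) 1 eC yx by auto
    moreover have "L' = add_mset C N1 + N2" using 1 by simp
    ultimately show ?thesis by blast
  next
    case (2 N1 N2)
    have "fam_edges N1 \<inter> fam_edges (add_mset C N2) = {y}" using K(2) 2 eC yx by auto
    moreover have "L' = N1 + add_mset C N2" using 2 by simp
    ultimately show ?thesis by blast
  next
    case (3 N1 N2)
    then have "x \<in> fam_edges L1 \<inter> fam_edges L2" using xA xB by auto
    then show ?thesis using K(2) yx by auto
  next
    case (4 N1 N2)
    then have "x \<in> fam_edges L1 \<inter> fam_edges L2" using xA xB by auto
    then show ?thesis using K(2) yx by auto
  qed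
qed

lemma shared_vertex_merge:
  assumes a: "L' = L1 + L2" "v \<in> fam_verts L1 \<inter> fam_verts L2"
  shows "\<exists>z\<in>fam_edges L1 \<inter> fam_edges L2. fam_incident L' z v"
  using add_mset_union_cases[OF a(1)]
proof (elim disjE exE conjE)
  fix N1 assume b: "L1 = add_mset C N1" "M = N1 + L2"
  have LL': "L = add_mset A (add_mset B N1) + L2" using b by simp
  have "v \<in> fam_verts (add_mset A (add_mset B N1))" "v \<in> fam_verts L2" using a(2) b vC by auto
  then obtain z where z: "z \<in> fam_edges (add_mset A (add_mset B N1))" "z \<in> fam_edges L2" "fam_incident L z v"
    using tree_LD(5)[OF LL'] by blast
  have zx: "z \<noteq> x" using z x_fresh b by auto
  have "z \<in> fam_edges L1" using z(1) zx b eC by auto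
  then show ?thesis using z fam_incident_merge[OF z(3) zx] by auto
next
  fix N2 assume b: "L2 = add_mset C N2" "M = L1 + N2"
  have LL': "L = L1 + add_mset A (add_mset B N2)" using b by simp
  have "v \<in> fam_verts L1" "v \<in> fam_verts (add_mset A (add_mset B N2))" using a(2) b vC by auto
  then obtain z where z: "z \<in> fam_edges L1" "z \<in> fam_edges (add_mset A (add_mset B N2))" "fam_incident L z v"
    using tree_LD(5)[OF LL'] by blast
  have zx: "z \<noteq> x" using z x_fresh b by auto
  have "z \<in> fam_edges L2" using z(2) zx b eC by auto
  then show ?thesis using z fam_incident_merge[OF z(3) zx] by auto
qed

lemma tree_family_merge: "tree_family L'"
  unfolding tree_family_def
proof (intro conjI allI impI ballI)
  have "wf_graph C" using wf_graph_glue tree_LD(1)[of A] tree_LD(1)[of B] by simp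
  then show "wf_graph P" if "P \<in># L'" for P using that tree_LD(1) by auto
  show "edge_mult L' y \<le> 2" for y using edge_mult_merge_le[of y] tree_LD(2)[of y] by linarith
  show "ends P y = ends Q y" if PQ: "P \<in># L'" "Q \<in># L'" "y \<in> edges P" "y \<in> edges Q" for P Q y
  proof -
    obtain P' where P': "P' \<in># L" "y \<in> edges P'" "ends P' y = ends P y"
      using ends_merge[OF PQ(1,3)] by blast
    obtain Q' where Q': "Q' \<in># L" "y \<in> edges Q'" "ends Q' y = ends Q y"
      using ends_merge[OF PQ(2,4)] by blast
    show ?thesis using tree_LD(3)[OF P'(1) Q'(1) P'(2) Q'(2)] P'(3) Q'(3) by simp
  qed
  show "\<exists>L1 L2. L' = L1 + L2 \<and> fam_edges L1 \<inter> fam_edges L2 = {y}" if "edge_mult L' y = 2" for y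
    using cut_merge[OF that] .
  show "\<exists>z\<in>fam_edges L1 \<inter> fam_edges L2. fam_incident L' z v"
    if "L' = L1 + L2" "v \<in> fam_verts L1 \<inter> fam_verts L2" for L1 L2 v
    using shared_vertex_merge[OF that] .
qed
end

section \<open>Invariance under split and merge steps\<close>

definition cmin_excess :: "('v, 'e) mgraph multiset \<Rightarrow> int" where
  "cmin_excess L = (\<Sum>P\<in>#L. int (cmin P)) - int (size L)"
definition nu_excess :: "('v, 'e) mgraph multiset \<Rightarrow> int" where
  "nu_excess L = (\<Sum>P\<in>#L. int (nu P)) - int (size L)"

definition decomposable_tree_family :: "('v, 'e) mgraph multiset \<Rightarrow> bool" where
  "decomposable_tree_family L \<longleftrightarrow> tree_family L \<and> (\<forall>P\<in>#L. decomps P \<noteq> {})"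

lemma split_step_preserves:
  assumes "decomposable_tree_family L" "split_step L L'"
  shows "decomposable_tree_family L' \<and> cmin_excess L' = cmin_excess L \<and> nu_excess L' = nu_excess L"
proof -
  obtain M H c e a x where step: "L = add_mset H M" "ve_separator H c e" "a \<in> ends H e"
    "x \<notin> \<Union>(edges ` set_mset L)"
    "L' = add_mset (split_first H c e a x) (add_mset (split_second H c e a x) M)"
    using assms(2) unfolding split_step_def by blast
  have tree: "tree_family L" and decomposable: "\<forall>P\<in>#L. decomps P \<noteq> {}"
    using assms(1) by (auto simp: decomposable_tree_family_def)
  have wfH: "wf_graph H" using tree step(1) by (auto simp: tree_family_def)
  have sep: "biconnected H" "c \<in> verts H" "e \<in> edges H" "\<not> connected_avoid H {e} {c}"
    using step(2) by (auto simp: ve_separator_def)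
  obtain b where eab: "ends H e = {a, b}"
    using wfH sep(3) by (rule wf_graph_edgeE) (use step(3) in \<open>auto simp: insert_commute\<close>)
  have x_new: "x \<notin> edges H" using step(1,4) by auto
  interpret S: ve_split H c e a b x
    using wfH sep eab x_new by unfold_locales auto
  have x_fresh: "x \<notin> fam_edges (add_mset H M)" using step(1,4) unfolding fam_edges_def by auto
  interpret C: family_split H M S.H1 S.H2 x using S.family_split_ve tree step(1) x_fresh by auto
  have L'_eq: "L' = add_mset S.H1 (add_mset S.H2 M)" using step(5) unfolding S.H1_def S.H2_def by simp
  have dH: "decomps H \<noteq> {}" using decomposable step(1) by simp
  have counts: "decomps S.H1 \<noteq> {}" "decomps S.H2 \<noteq> {}"
    "cmin H + 1 = cmin S.H1 + cmin S.H2" "nu H + 1 = nu S.H1 + nu S.H2"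
    using S.split_cmin_nu[OF dH] by auto
  have "decomposable_tree_family L'"
    using C.tree_family_split L'_eq counts decomposable step(1)
    unfolding decomposable_tree_family_def by auto
  moreover have "cmin_excess L' = cmin_excess L" unfolding cmin_excess_def L'_eq step(1) using counts(3) by simp
  moreover have "nu_excess L' = nu_excess L" unfolding nu_excess_def L'_eq step(1) using counts(4) by simp
  ultimately show ?thesis by blast
qed

lemma merge_step_preserves:
  assumes "decomposable_tree_family L" "merge_step L L'"
  shows "decomposable_tree_family L' \<and> cmin_excess L' = cmin_excess L \<and> nu_excess L' = nu_excess L"
proof -
  obtain M A B x where step: "L = add_mset A (add_mset B M)" "is_cycle_graph A" "is_cycle_graph B"
    "x \<in> edges A" "x \<in> edges B" "L' = add_mset (glue A B x) M"
    using assms(2) unfolding merge_step_def by blast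
  have tree: "tree_family L" and decomposable: "\<forall>P\<in>#L. decomps P \<noteq> {}"
    using assms(1) by (auto simp: decomposable_tree_family_def)
  interpret merge: family_merge A B M x using tree step(1,4,5) by unfold_locales simp_all
  have cgC: "is_cycle_graph (glue A B x)" using is_cycle_graph_glue[OF step(2-5) merge.glue_conditions] .
  have "tree_family L'" using merge.tree_family_merge step(6) by simp
  moreover have "\<forall>P\<in>#L'. decomps P \<noteq> {}" using decomposable cycle_graph_decomps[OF cgC] step(1,6) by auto
  moreover have "cmin_excess L' = cmin_excess L" "nu_excess L' = nu_excess L"
    unfolding cmin_excess_def nu_excess_def
    using step cmin_cycle_graph[OF cgC] cmin_cycle_graph[OF step(2)] cmin_cycle_graph[OF step(3)]
      nu_cycle_graph[OF cgC] nu_cycle_graph[OF step(2)] nu_cycle_graph[OF step(3)] by simp_all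
  ultimately show ?thesis unfolding decomposable_tree_family_def by blast
qed

theorem theorem10:
  fixes G :: "('v, nat) mgraph" and K :: "('v, nat) mgraph multiset"
  assumes "wf_graph G" and "biconnected G" and "eulerian G"
    and "is_25_components G K"
  shows "int (cmin G) = (\<Sum>H\<in>#K. int (cmin H)) - int (size K) + 1 \<and>
         int (nu G) = (\<Sum>H\<in>#K. int (nu H)) - int (size K) + 1"
proof -
  obtain L where s: "split_step\<^sup>*\<^sup>* {#G#} L" and m: "merge_step\<^sup>*\<^sup>* L K"
    using assms(4) unfolding is_25_components_def by blast
  let ?I = "\<lambda>L. decomposable_tree_family L \<and> cmin_excess L = int (cmin G) - 1 \<and> nu_excess L = int (nu G) - 1"
  have i0: "?I {#G#}"
    using tree_family_single[OF assms(1)] eulerian_decomps_nonempty[OF assms(1,3)]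
    unfolding decomposable_tree_family_def cmin_excess_def nu_excess_def by simp
  have iL: "?I L" using s
  proof (induction rule: rtranclp_induct)
    case base then show ?case using i0 .
  next
    case (step y z) then show ?case using split_step_preserves by metis
  qed
  have iK: "?I K" using m
  proof (induction rule: rtranclp_induct)
    case base then show ?case using iL .
  next
    case (step y z) then show ?case using merge_step_preserves by metis
  qed
  then show ?thesis unfolding cmin_excess_def nu_excess_def by linarith
qed

end
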